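(* For all $\delta\ge0$ sufficiently small, the operator $\mathcal{L}_\delta$ has a unique invariant probability density in $\mathcal{B}$: there is a unique $f_\delta\in\mathcal{B}$ with $\int f_\delta\,dx=1$ and $\mathcal{L}_\delta f_\delta=f_\delta$.
   Context: Let $b:\mathbb{R}^d\to\mathbb{R}^d$ satisfy (A) local Lipschitz continuity: for each $x_0\in\mathbb{R}^d$ there are $K>0$, $\delta_0>0$ with $|b(x_0)-b(x)|\le K|x_0-x|$ whenever $|x_0-x|<\delta_0$; and (B) dissipativity: there are $c_1\in\mathbb{R}$, $c_2>0$ with $\langle b(x),x\rangle\le c_1-c_2|x|^2$ for all $x\in\mathbb{R}^d$. Let $X^x_t$ be the solution of $dX_t^x=b(X_t^x)\,dt+dW_t$, $X_0^x=x$, with $W$ a standard Brownian motion in $\mathbb{R}^d$, and let $\theta_t$ be the flow of $\dot\theta=b(\theta)$. It is known that the law of $X_1^x$ has a density $\kappa(x,y)$ (in $y$, w.r.t. Lebesgue measure), continuous in $(x,y)$, and that there are constants $\lambda_0,\lambda_1\in(0,1]$, $C_0,C_1\ge 1$ such that for all $x,y$: $C_0^{-1}e^{-|\theta_1(x)-y|^2/\lambda_0}\le\kappa(x,y)\le C_0e^{-\lambda_0|\theta_1(x)-y|^2}$ and $|\nabla_x\kappa(x,y)|,|\nabla_y\kappa(x,y)|\le C_1e^{-\lambda_1|\theta_1(x)-y|^2}$. The transfer operator $\mathcal{L}=\mathcal{L}_0:L^1(\mathbb{R}^d)\to L^1(\mathbb{R}^d)$ is $\mathcal{L}f(y)=\int_{\mathbb{R}^d}\kappa(x,y)f(x)\,dx$.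 Spaces: for $\alpha\ge0$ let $\rho_\alpha(x)=(1+|x|^2)^{\alpha/2}$ and let $L^1_\alpha$ be the space of measurable $f:\mathbb{R}^d\to\mathbb{R}$ with $\|f\|_{L^1_\alpha}=\int\rho_\alpha(x)|f(x)|\,dx<\infty$. Fix a compact set $D\subset\mathbb{R}^d$ (a compact neighbourhood of $0$). The strong norm is $\|f\|_s=\|f\|_{L^1_2}+\|1_Df\|_{L^2}$ and the strong space is $\mathcal{B}=\{f\in L^1_2:\|f\|_s<\infty\}$. Set $V_{\mathcal{B}}=\{f\in\mathcal{B}:\int f\,dx=0\}$ and $V_{L^1}=\{f\in L^1:\int f\,dx=0\}$. Perturbations: fix $\bar\delta>0$. For $\delta\in[0,\bar\delta)$ let $\kappa_\delta=\kappa+\delta\dot\kappa+r_\delta$, where $\dot\kappa,r_\delta\in L^2(D\times D)$ (extended by zero outside $D\times D$), $r_0=0$, and $\|r_\delta\|_{L^2}=o(\delta)$ as $\delta\to0$. Define $\mathcal{L}_\delta f(y)=\int\kappa_\delta(x,y)f(x)\,dx$ and $\dot{\mathcal{L}}f(y)=\int\dot\kappa(x,y)f(x)\,dx$. Standing assumption: every $\mathcal{L}_\delta$, $\delta\in[0,\bar\delta)$, is integral preserving, i.e. $\int\mathcal{L}_\delta g\,dy=\int g\,dx$ for all $g\in L^1$. *)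

theory Defs
  imports "HOL-Analysis.Analysis"
begin

definition rho :: "real \<Rightarrow> 'a::euclidean_space \<Rightarrow> real" where
  "rho \<alpha> x = (1 + (norm x)^2) powr (\<alpha> / 2)"

definition L1w :: "real \<Rightarrow> ('a::euclidean_space \<Rightarrow> real) set" where
  "L1w \<alpha> = {f. f \<in> borel_measurable lebesgue \<and>
                  integrable lebesgue (\<lambda>x. rho \<alpha> x * f x)}"

definition strong_space :: "'a::euclidean_space set \<Rightarrow> ('a \<Rightarrow> real) set" where
  "strong_space D = {f \<in> L1w 2. integrable lebesgue (\<lambda>x. (indicator D x * f x)^2)}"

definition transfer :: "('a::euclidean_space \<Rightarrow> 'a \<Rightarrow> real) \<Rightarrow> ('a \<Rightarrow> real) \<Rightarrow> 'a \<Rightarrow> real" where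
  "transfer k f = (\<lambda>y. LINT x|lebesgue. k x y * f x)"

definition L2kernel :: "('a::euclidean_space \<Rightarrow> 'a \<Rightarrow> real) \<Rightarrow> bool" where
  "L2kernel k \<longleftrightarrow> (\<lambda>z. k (fst z) (snd z)) \<in> borel_measurable (lborel :: ('a \<times> 'a) measure) \<and>
                   integrable (lborel :: ('a \<times> 'a) measure) (\<lambda>z. (k (fst z) (snd z))^2)"

definition L2norm :: "('a::euclidean_space \<Rightarrow> 'a \<Rightarrow> real) \<Rightarrow> real" where
  "L2norm k = sqrt (LINT z|(lborel :: ('a \<times> 'a) measure). (k (fst z) (snd z))^2)"

end

theory Submission
  imports Defs "HOL-Probability.Probability"
begin

text \<open>The unperturbed transfer operator \<open>L\<close> satisfies the hypotheses of Harris' theorem: the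
  Gaussian upper bound together with the dissipativity of the flow gives a Lyapunov drift
  \<open>L\<^sup>* |x|\<^sup>2 \<le> \<gamma> |x|\<^sup>2 + K\<close> with \<open>\<gamma> < 1\<close>, and the Gaussian lower bound gives a uniform minorization
  on sublevel sets of \<open>|x|\<^sup>2\<close>. Hence (in the form of Hairer and Mattingly) \<open>L\<close> contracts mean zero
  functions in a weighted norm \<open>\<integral> (1 + \<beta> |x|\<^sup>2) |f|\<close>. The perturbation \<open>L\<^sub>\<delta> - L\<close> has an \<open>L\<^sup>2\<close> kernel
  supported in \<open>D \<times> D\<close> of norm \<open>O(\<delta>)\<close>, so adding a small multiple of \<open>\<parallel>1\<^sub>D f\<parallel>\<^sub>2\<close> to the norm, \<open>L\<^sub>\<delta>\<close>
  still contracts mean zero functions for small \<open>\<delta>\<close>. The iterates of \<open>L\<^sub>\<delta>\<close> on any probability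
  density then converge geometrically to an invariant density, and the contraction applied to the
  difference of two invariant densities gives uniqueness.\<close>

section \<open>Gaussian integrals\<close>

lemma integrable_gaussian_1d:
  fixes \<mu> :: real assumes "\<mu> > 0"
  shows "integrable lborel (\<lambda>x::real. exp (- \<mu> * x\<^sup>2))"
proof -
  define \<sigma> where "\<sigma> = sqrt (1 / (2*\<mu>))"
  have s: "\<sigma> > 0" "\<sigma>\<^sup>2 = 1/(2*\<mu>)" using assms by (auto simp: \<sigma>_def)
  have eq: "(\<lambda>x::real. exp (- \<mu> * x\<^sup>2)) = (\<lambda>x. sqrt (2 * pi * \<sigma>\<^sup>2) * normal_density 0 \<sigma> x)"
    using s assms by (auto simp: normal_density_def fun_eq_iff field_simps)
  show ?thesis unfolding eq by (intro integrable_mult_right integrable_normal_density[OF s(1)])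
qed

lemma nn_integral_gaussian_finite:
  fixes \<mu> :: real assumes mu: "\<mu> > 0"
  shows "(\<integral>\<^sup>+z. ennreal (exp (- \<mu> * (norm (z::'a::euclidean_space))\<^sup>2)) \<partial>lborel) < \<infinity>"
proof -
  have eq: "exp (- \<mu> * (norm z)\<^sup>2) = (\<Prod>b\<in>Basis. exp (- \<mu> * (z \<bullet> b)\<^sup>2))" for z :: 'a
  proof -
    have "(norm z)\<^sup>2 = z \<bullet> z" by (rule power2_norm_eq_inner)
    also have "\<dots> = (\<Sum>b\<in>Basis. (z \<bullet> b) * (z \<bullet> b))"
      by (rule euclidean_inner)
    finally have "(norm z)\<^sup>2 = (\<Sum>b\<in>Basis. (z \<bullet> b)\<^sup>2)"
      by (simp add: power2_eq_square)
    then have "- \<mu> * (norm z)\<^sup>2 = (\<Sum>b\<in>Basis. - \<mu> * (z \<bullet> b)\<^sup>2)"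
      by (simp add: sum_distrib_left)
    then show ?thesis by (simp add: exp_sum)
  qed
  have "(\<integral>\<^sup>+z. ennreal (exp (- \<mu> * (norm (z::'a))\<^sup>2)) \<partial>lborel)
      = (\<integral>\<^sup>+z. (\<Prod>b\<in>Basis. ennreal (exp (- \<mu> * ((z::'a) \<bullet> b)\<^sup>2))) \<partial>lborel)"
    unfolding eq by (simp add: prod_ennreal)
  also have "\<dots> = (\<Prod>b\<in>(Basis::'a set). (\<integral>\<^sup>+x. ennreal (exp (- \<mu> * x\<^sup>2)) \<partial>lborel))"
    by (rule nn_integral_lborel_prod) auto
  also have "\<dots> < \<infinity>"
  proof -
    have "(\<integral>\<^sup>+x. ennreal (exp (- \<mu> * x\<^sup>2)) \<partial>lborel) = ennreal (LINT x|lborel. exp (- \<mu> * x\<^sup>2))"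
      by (rule nn_integral_eq_integral[OF integrable_gaussian_1d[OF mu]]) auto
    then show ?thesis by (simp add: power_less_top_ennreal)
  qed
  finally show ?thesis .
qed

lemma nn_integral_lborel_translate:
  fixes f :: "'a::euclidean_space \<Rightarrow> ennreal"
  assumes [measurable]: "f \<in> borel_measurable borel"
  shows "(\<integral>\<^sup>+y. f (y - c) \<partial>lborel) = (\<integral>\<^sup>+z. f z \<partial>lborel)"
proof -
  have "(\<integral>\<^sup>+y. f (y - c) \<partial>lborel) = (\<integral>\<^sup>+y. f (y - c) \<partial>distr lborel borel ((+) c))"
    by (simp add: lborel_distr_plus)
  also have "\<dots> = (\<integral>\<^sup>+x. f (c + x - c) \<partial>lborel)"
    by (subst nn_integral_distr) auto
  finally show ?thesis by simp
qed

section \<open>Borel representatives of the strong space\<close>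

definition sq_norm :: "'a::euclidean_space \<Rightarrow> real" where "sq_norm x = (norm x)^2"

definition kernel_op :: "('a::euclidean_space \<Rightarrow> 'a \<Rightarrow> real) \<Rightarrow> ('a \<Rightarrow> real) \<Rightarrow> 'a \<Rightarrow> real" where
  "kernel_op k f y = (\<integral>x. k x y * f x \<partial>lborel)"

text \<open>\<open>strong_borel D\<close> consists of the Borel measurable elements of \<open>strong_space D\<close>, with the
  integrability conditions taken over \<open>lborel\<close> rather than its completion; every element of
  \<open>strong_space D\<close> has such a representative almost everywhere.\<close>
definition strong_borel :: "'a::euclidean_space set \<Rightarrow> ('a \<Rightarrow> real) set" where
  "strong_borel D = {f. f \<in> borel_measurable borel \<and> integrable lborel (\<lambda>x. (1 + sq_norm x) * f x)
              \<and> integrable lborel (\<lambda>x. (indicator D x * f x)^2)}"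

definition weighted_L1 :: "real \<Rightarrow> ('a::euclidean_space \<Rightarrow> real) \<Rightarrow> real" where
  "weighted_L1 \<beta> f = (\<integral>x. (1 + \<beta> * sq_norm x) * \<bar>f x\<bar> \<partial>lborel)"

definition L2_sq_on :: "'a::euclidean_space set \<Rightarrow> ('a \<Rightarrow> real) \<Rightarrow> real" where
  "L2_sq_on D f = (\<integral>x. (indicator D x * f x)^2 \<partial>lborel)"

lemma sq_norm_nonneg[simp]: "0 \<le> sq_norm x" by (simp add: sq_norm_def)

lemma sq_norm_measurable[measurable]: "sq_norm \<in> borel_measurable borel"
  unfolding sq_norm_def by measurable

lemma square_sum_le: "(a + b)^2 \<le> 2 * a^2 + 2 * (b::real)^2"
proof -
  have "0 \<le> (a - b)^2" by simp
  then show ?thesis by (simp add: power2_eq_square algebra_simps)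
qed

lemma two_mult_le_weighted_squares: assumes "0 < e" shows "2 * u * v \<le> e * u^2 + v^2 / (e::real)"
proof -
  have "0 \<le> (e * u - v)^2" by simp
  then have "2 * e * u * v \<le> e^2 * u^2 + v^2" by (simp add: power2_eq_square algebra_simps)
  have "2 * u * v = (2 * e * u * v) / e" using assms by simp
  also have "\<dots> \<le> (e^2 * u^2 + v^2) / e"
    using \<open>2 * e * u * v \<le> e^2 * u^2 + v^2\<close> assms by (intro divide_right_mono) auto
  also have "\<dots> = e * u^2 + v^2 / e" using assms by (simp add: field_simps power2_eq_square)
  finally show ?thesis .
qed

lemma sq_norm_split:
  assumes e: "0 < e" shows "sq_norm y \<le> (1 + e) * sq_norm c + (1 + 1/e) * sq_norm (y - c)"
proof -
  have n: "norm y \<le> norm c + norm (y - c)" using norm_triangle_ineq[of c "y - c"] by simp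
  have "(norm y)^2 \<le> (norm c + norm (y - c))^2" using n by (simp add: power_mono)
  also have "\<dots> = (norm c)^2 + 2 * norm c * norm (y - c) + (norm (y - c))^2"
    by (simp add: power2_eq_square algebra_simps)
  also have "\<dots> \<le> (norm c)^2 + (e * (norm c)^2 + (norm (y - c))^2 / e) + (norm (y - c))^2"
    using two_mult_le_weighted_squares[OF e, of "norm c" "norm (y - c)"] by linarith
  also have "\<dots> = (1 + e) * (norm c)^2 + (1 + 1/e) * (norm (y - c))^2"
    by (simp add: algebra_simps)
  finally show ?thesis by (simp add: sq_norm_def)
qed

lemma square_sum4_le: "(u1 + u2 + u3 + u4)^2 \<le> 4 * (u1^2 + u2^2 + u3^2 + (u4::real)^2)"
proof -
  have "(u1 + u2 + u3 + u4)^2 = ((u1 + u2) + (u3 + u4))^2" by (simp add: add.assoc)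
  also have "\<dots> \<le> 2 * (u1 + u2)^2 + 2 * (u3 + u4)^2" by (rule square_sum_le)
  also have "\<dots> \<le> 2 * (2 * u1^2 + 2 * u2^2) + 2 * (2 * u3^2 + 2 * u4^2)"
    using square_sum_le[of u1 u2] square_sum_le[of u3 u4] by (intro add_mono mult_left_mono) auto
  finally show ?thesis by simp
qed

lemma abs_le_beta_weight: "0 \<le> b \<Longrightarrow> \<bar>y\<bar> \<le> (1 + b * sq_norm x) * \<bar>y::real\<bar>"
  using mult_right_mono[of 1 "1 + b * sq_norm x" "\<bar>y\<bar>"] by simp

lemma weighted_L1_nonneg: "0 \<le> weighted_L1 b h" if "0 \<le> b"
  unfolding weighted_L1_def using that by (intro integral_nonneg_AE) auto

lemma strong_borelD:
  assumes "f \<in> strong_borel D"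
  shows "f \<in> borel_measurable borel" "integrable lborel (\<lambda>x. (1 + sq_norm x) * f x)"
    "integrable lborel (\<lambda>x. (indicator D x * f x)^2)"
  using assms by (auto simp: strong_borel_def)

lemma strong_borel_weighted_integrable:
  assumes "f \<in> strong_borel D" "0 \<le> \<beta>"
  shows "integrable lborel (\<lambda>x. (1 + \<beta> * sq_norm x) * \<bar>f x\<bar>)"
proof -
  note f[measurable] = strong_borelD(1)[OF assms(1)]
  have i: "integrable lborel (\<lambda>x. (1 + \<beta>) * ((1 + sq_norm x) * f x))"
    using strong_borelD(2)[OF assms(1)] by simp
  show ?thesis
  proof (rule Bochner_Integration.integrable_bound[OF i])
    show "(\<lambda>x. (1 + \<beta> * sq_norm x) * \<bar>f x\<bar>) \<in> borel_measurable lborel"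
      by measurable
    show "AE x in lborel. norm ((1 + \<beta> * sq_norm x) * \<bar>f x\<bar>) \<le> norm ((1 + \<beta>) * ((1 + sq_norm x) * f x))"
    proof (rule AE_I2)
      fix x :: 'a
      have "1 + \<beta> * sq_norm x \<le> (1 + \<beta>) * (1 + sq_norm x)"
        using assms(2) sq_norm_nonneg[of x] by (simp add: algebra_simps)
      then have "(1 + \<beta> * sq_norm x) * \<bar>f x\<bar> \<le> (1 + \<beta>) * (1 + sq_norm x) * \<bar>f x\<bar>"
        by (simp add: mult_right_mono)
      then show "norm ((1 + \<beta> * sq_norm x) * \<bar>f x\<bar>) \<le> norm ((1 + \<beta>) * ((1 + sq_norm x) * f x))"
        using assms(2) sq_norm_nonneg[of x] by (simp add: abs_mult)
    qed
  qed
qed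

lemma abs_le_weight: "\<bar>y\<bar> \<le> (1 + sq_norm x) * \<bar>y::real\<bar>"
  using mult_right_mono[of 1 "1 + sq_norm x" "\<bar>y\<bar>"] by simp

lemma sq_norm_abs_le_weight: "sq_norm x * \<bar>y\<bar> \<le> (1 + sq_norm x) * \<bar>y::real\<bar>"
  using mult_right_mono[of "sq_norm x" "1 + sq_norm x" "\<bar>y\<bar>"] by simp

lemma strong_borel_integrable:
  assumes "f \<in> strong_borel D"
  shows "integrable lborel f" "integrable lborel (\<lambda>x. \<bar>f x\<bar>)"
    "integrable lborel (\<lambda>x. sq_norm x * \<bar>f x\<bar>)"
proof -
  note f[measurable] = strong_borelD(1)[OF assms(1)]
  have i: "integrable lborel (\<lambda>x. (1 + 1 * sq_norm x) * \<bar>f x\<bar>)"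
    by (rule strong_borel_weighted_integrable[OF assms]) simp
  show "integrable lborel f"
    by (rule Bochner_Integration.integrable_bound[OF i]) (auto simp: abs_mult abs_le_weight)
  then show "integrable lborel (\<lambda>x. \<bar>f x\<bar>)" by simp
  show "integrable lborel (\<lambda>x. sq_norm x * \<bar>f x\<bar>)"
    by (rule Bochner_Integration.integrable_bound[OF i]) (auto simp: abs_mult sq_norm_abs_le_weight)
qed

context fixes D :: "'a::euclidean_space set" assumes Dm[measurable]: "D \<in> sets borel"
begin

lemma strong_borel_add:
  assumes "f \<in> strong_borel D" "g \<in> strong_borel D"
  shows "(\<lambda>x. f x + g x) \<in> strong_borel D"
proof -
  note [measurable] = strong_borelD(1)[OF assms(1)] strong_borelD(1)[OF assms(2)]
  have weighted: "integrable lborel (\<lambda>x. (1 + sq_norm x) * (f x + g x))"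
    using Bochner_Integration.integrable_add[OF strong_borelD(2)[OF assms(1)] strong_borelD(2)[OF assms(2)]]
      by (simp add: distrib_left)
  have i: "integrable lborel (\<lambda>x. 2 * (indicator D x * f x)^2 + 2 * (indicator D x * g x)^2)"
    using strong_borelD(3)[OF assms(1)] strong_borelD(3)[OF assms(2)] by auto
  have local_sq: "integrable lborel (\<lambda>x. (indicator D x * (f x + g x))^2)"
  proof (rule Bochner_Integration.integrable_bound[OF i])
    show "(\<lambda>x. (indicator D x * (f x + g x))^2) \<in> borel_measurable lborel"
      by measurable
    show "AE x in lborel. norm ((indicator D x * (f x + g x))^2) \<le> norm (2 * (indicator D x * f x)^2 + 2 * (indicator D x * g x)^2)"
      using square_sum_le by (auto simp: distrib_left)
  qed
  show ?thesis using weighted local_sq by (auto simp: strong_borel_def)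
qed

lemma strong_borel_dominated:
  assumes f: "f \<in> strong_borel D" and g[measurable]: "g \<in> borel_measurable borel"
    and le: "\<And>x. \<bar>g x\<bar> \<le> \<bar>f x\<bar>"
  shows "g \<in> strong_borel D"
proof -
  note [measurable] = strong_borelD(1)[OF f]
  have weighted: "integrable lborel (\<lambda>x. (1 + sq_norm x) * g x)"
  proof (rule Bochner_Integration.integrable_bound[OF strong_borelD(2)[OF f]])
    show "(\<lambda>x. (1 + sq_norm x) * g x) \<in> borel_measurable lborel" by measurable
    show "AE x in lborel. norm ((1 + sq_norm x) * g x) \<le> norm ((1 + sq_norm x) * f x)"
      using le by (auto simp: abs_mult intro!: mult_left_mono add_nonneg_nonneg)
  qed
  have local_sq: "integrable lborel (\<lambda>x. (indicator D x * g x)^2)"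
  proof (rule Bochner_Integration.integrable_bound[OF strong_borelD(3)[OF f]])
    show "(\<lambda>x. (indicator D x * g x)^2) \<in> borel_measurable lborel"
      by measurable
    show "AE x in lborel. norm ((indicator D x * g x)^2) \<le> norm ((indicator D x * f x)^2)"
    proof (rule AE_I2)
      fix x :: 'a
      have "\<bar>indicator D x * g x\<bar> \<le> \<bar>indicator D x * f x\<bar>"
        using le[of x] by (auto simp: indicator_def)
      then have "(indicator D x * g x)^2 \<le> (indicator D x * f x)^2"
        by (simp add: abs_le_square_iff)
      then show "norm ((indicator D x * g x)^2) \<le> norm ((indicator D x * f x)^2)" by simp
    qed
  qed
  show ?thesis using weighted local_sq by (auto simp: strong_borel_def)
qed

lemma strong_borel_scale:
  assumes f: "f \<in> strong_borel D"
  shows "(\<lambda>x. c * f x) \<in> strong_borel D"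
proof -
  note [measurable] = strong_borelD(1)[OF f]
  have eq: "(\<lambda>x. (1 + sq_norm x) * (c * f x)) = (\<lambda>x. c * ((1 + sq_norm x) * f x))"
    by (auto simp: fun_eq_iff)
  have weighted: "integrable lborel (\<lambda>x. (1 + sq_norm x) * (c * f x))"
    unfolding eq by (intro Bochner_Integration.integrable_mult_right strong_borelD(2)[OF f])
  have local_sq: "integrable lborel (\<lambda>x. (indicator D x * (c * f x))^2)"
    using strong_borelD(3)[OF f] by (simp add: power_mult_distrib algebra_simps)
  show ?thesis using weighted local_sq by (auto simp: strong_borel_def)
qed

lemma strong_borel_diff:
  assumes "f \<in> strong_borel D" "g \<in> strong_borel D"
  shows "(\<lambda>x. f x - g x) \<in> strong_borel D"
  using strong_borel_add[OF assms(1) strong_borel_scale[OF assms(2), of "-1"]] by simp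

lemma strong_borel_pos_neg:
  assumes "f \<in> strong_borel D" shows "(\<lambda>x. max (f x) 0) \<in> strong_borel D" "(\<lambda>x. max (- f x) 0) \<in> strong_borel D"
  using strong_borelD(1)[OF assms] by (auto intro!: strong_borel_dominated[OF assms])

lemma strong_borel_abs:
  assumes "f \<in> strong_borel D" shows "(\<lambda>x. \<bar>f x\<bar>) \<in> strong_borel D"
  using strong_borelD(1)[OF assms] by (auto intro!: strong_borel_dominated[OF assms])

lemma strong_borel_indicator_mult:
  assumes "f \<in> strong_borel D" "S \<in> sets borel" shows "(\<lambda>x. indicator S x * f x) \<in> strong_borel D"
  using strong_borelD(1)[OF assms(1)] assms(2)
    by (auto intro!: strong_borel_dominated[OF assms(1)] simp: indicator_def)

lemma strong_borel_in_strong_space: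
  assumes "f \<in> strong_borel D" shows "f \<in> strong_space D"
proof -
  note [measurable] = strong_borelD(1)[OF assms]
  have r: "rho 2 x = 1 + sq_norm x" for x :: 'a
    by (simp add: rho_def sq_norm_def)
  have "integrable lebesgue (\<lambda>x. rho 2 x * f x)"
    unfolding r by (subst integrable_completion) (auto intro: strong_borelD(2)[OF assms])
  moreover have "integrable lebesgue (\<lambda>x. (indicator D x * f x)^2)"
    by (subst integrable_completion) (auto intro: strong_borelD(3)[OF assms])
  moreover have "f \<in> borel_measurable lebesgue"
    by (rule measurable_completion) simp
  ultimately show ?thesis by (auto simp: strong_space_def L1w_def)
qed

lemma strong_borel_AE_cong:
  assumes g: "g \<in> strong_borel D" and h[measurable]: "h \<in> borel_measurable borel" and ae: "AE x in lborel. h x = g x"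
  shows "h \<in> strong_borel D"
proof -
  note [measurable] = strong_borelD(1)[OF g]
  have weighted: "integrable lborel (\<lambda>x. (1 + sq_norm x) * h x)"
  proof (rule integrable_cong_AE_imp[OF strong_borelD(2)[OF g]])
    show "(\<lambda>x. (1 + sq_norm x) * h x) \<in> borel_measurable lborel" by measurable
    show "AE x in lborel. (1 + sq_norm x) * g x = (1 + sq_norm x) * h x" using ae
      by eventually_elim simp
  qed
  have local_sq: "integrable lborel (\<lambda>x. (indicator D x * h x)^2)"
  proof (rule integrable_cong_AE_imp[OF strong_borelD(3)[OF g]])
    show "(\<lambda>x. (indicator D x * h x)^2) \<in> borel_measurable lborel" by measurable
    show "AE x in lborel. (indicator D x * g x)^2 = (indicator D x * h x)^2" using ae
      by eventually_elim simp
  qed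
  show ?thesis using weighted local_sq h by (auto simp: strong_borel_def)
qed

lemma indicator_strong_borel:
  assumes S[measurable]: "S \<in> sets borel" and sub: "S \<subseteq> cball 0 n"
  shows "(\<lambda>x. indicator S x :: real) \<in> strong_borel D"
proof -
  have fin: "emeasure lborel S < \<infinity>"
    using emeasure_mono[OF sub, of lborel] emeasure_lborel_cball_finite[of "0::'a" n]
    by (auto simp: top.extremum_strict le_less_trans)
  have i1: "integrable lborel (\<lambda>x. indicator S x *\<^sub>R (1 + sq_norm x))"
  proof (rule integrableI_bounded_set_indicator[where B="1 + n^2"])
    show "S \<in> sets lborel" by simp
    show "(\<lambda>x. 1 + sq_norm x) \<in> borel_measurable lborel" by measurable
    show "emeasure lborel S < \<infinity>" by (rule fin)
    show "AE x in lborel. x \<in> S \<longrightarrow> norm (1 + sq_norm x) \<le> 1 + n^2"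
    proof (rule AE_I2, rule impI)
      fix x assume "x \<in> S"
      then have "norm x \<le> n" using sub by auto
      then have "(norm x)^2 \<le> n^2" by (simp add: power_mono)
      then show "norm (1 + sq_norm x) \<le> 1 + n^2" by (simp add: sq_norm_def)
    qed
  qed
  have weighted: "integrable lborel (\<lambda>x. (1 + sq_norm x) * indicator S x)"
    using i1 by (simp add: mult.commute)
  have eq: "(\<lambda>x. (indicator D x * indicator S x)^2) = (indicator (D \<inter> S) :: 'a \<Rightarrow> real)"
    by (auto simp: fun_eq_iff indicator_def)
  have fin2: "emeasure lborel (D \<inter> S) < \<infinity>"
    using emeasure_mono[of "D \<inter> S" S lborel] fin by auto
  have local_sq: "integrable lborel (\<lambda>x. (indicator D x * indicator S x :: real)^2)"
    unfolding eq using fin2 by (intro integrable_real_indicator) auto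
  show ?thesis using weighted local_sq by (auto simp: strong_borel_def)
qed

end

definition integral_preserving :: "'a::euclidean_space set \<Rightarrow> ('a \<Rightarrow> 'a \<Rightarrow> real) \<Rightarrow> bool" where
  "integral_preserving D k \<longleftrightarrow> (\<forall>g \<in> strong_space D. integrable lebesgue (transfer k g) \<and>
     (LINT y|lebesgue. transfer k g y) = (LINT x|lebesgue. g x))"

definition unique_invariant_density :: "'a::euclidean_space set \<Rightarrow> ('a \<Rightarrow> 'a \<Rightarrow> real) \<Rightarrow> bool" where
  "unique_invariant_density D k \<longleftrightarrow> (\<exists>f \<in> strong_space D.
     (LINT x|lebesgue. f x) = 1 \<and> (AE y in lebesgue. transfer k f y = f y) \<and>
     (\<forall>g \<in> strong_space D. (LINT x|lebesgue. g x) = 1 \<and> (AE y in lebesgue. transfer k g y = g y)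
        \<longrightarrow> (AE x in lebesgue. g x = f x)))"

lemma integral_preservingD:
  assumes "integral_preserving D k" "g \<in> strong_space D"
  shows "integrable lebesgue (transfer k g)" "(LINT y|lebesgue. transfer k g y) = (LINT x|lebesgue. g x)"
  using assms by (auto simp: integral_preserving_def)

lemma strong_space_borel_representative:
  assumes Dm[measurable]: "D \<in> sets borel" and g: "g \<in> strong_space D"
  obtains g' where "g' \<in> strong_borel D" "AE x in lebesgue. g x = g' x"
proof -
  have gm: "g \<in> borel_measurable lebesgue"
    and gi1: "integrable lebesgue (\<lambda>x. rho 2 x * g x)"
    and gi2: "integrable lebesgue (\<lambda>x. (indicator D x * g x)^2)"
    using g by (auto simp: strong_space_def L1w_def)
  obtain g' where g'm: "g' \<in> borel_measurable lborel" and ae: "AE x in lborel. g x = g' x"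
    using completion_ex_borel_measurable_real[OF gm] by blast
  have g'b[measurable]: "g' \<in> borel_measurable borel" using g'm by simp
  have aeL: "AE x in lebesgue. g x = g' x" using ae by (rule AE_completion)
  have "integrable lebesgue (\<lambda>x. (1 + sq_norm x) * g' x)"
  proof (rule integrable_cong_AE_imp[OF gi1])
    show "(\<lambda>x. (1 + sq_norm x) * g' x) \<in> borel_measurable lebesgue"
      by (rule measurable_completion) measurable
    show "AE x in lebesgue. rho 2 x * g x = (1 + sq_norm x) * g' x"
      using aeL by eventually_elim (simp add: rho_def sq_norm_def)
  qed
  then have i1: "integrable lborel (\<lambda>x. (1 + sq_norm x) * g' x)"
    by (subst (asm) integrable_completion) measurable
  have "integrable lebesgue (\<lambda>x. (indicator D x * g' x)^2)"
  proof (rule integrable_cong_AE_imp[OF gi2])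
    show "(\<lambda>x. (indicator D x * g' x)^2) \<in> borel_measurable lebesgue"
      by (rule measurable_completion) measurable
    show "AE x in lebesgue. (indicator D x * g x)^2 = (indicator D x * g' x)^2"
      using aeL by eventually_elim simp
  qed
  then have i2: "integrable lborel (\<lambda>x. (indicator D x * g' x)^2)"
    by (subst (asm) integrable_completion) measurable
  show ?thesis using i1 i2 aeL by (intro that) (auto simp: strong_borel_def)
qed

lemma transfer_AE_cong:
  assumes km[measurable]: "(\<lambda>(x,y). k x y) \<in> borel_measurable (lborel \<Otimes>\<^sub>M lborel)"
    and gm: "g \<in> borel_measurable lebesgue" and g'm[measurable]: "g' \<in> borel_measurable borel"
    and ae: "AE x in lebesgue. g x = g' x"
  shows "transfer k g = transfer k g'"
proof
  fix y
  have ky: "(\<lambda>x. k x y) \<in> borel_measurable lebesgue"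
    by (rule measurable_completion) measurable
  have "(\<lambda>x. k x y * g x) \<in> borel_measurable lebesgue" using ky gm by measurable
  moreover have "(\<lambda>x. k x y * g' x) \<in> borel_measurable lebesgue"
    by (rule measurable_completion) measurable
  ultimately show "transfer k g y = transfer k g' y"
    unfolding transfer_def using ae by (intro integral_cong_AE) (auto elim!: eventually_mono)
qed

lemma Cauchy_Schwarz_integral:
  fixes u v :: "'b \<Rightarrow> real"
  assumes [measurable]: "u \<in> borel_measurable M" "v \<in> borel_measurable M"
    and iu: "integrable M (\<lambda>x. (u x)^2)" and iv: "integrable M (\<lambda>x. (v x)^2)"
  shows "integrable M (\<lambda>x. u x * v x)"
    "(\<integral>x. \<bar>u x * v x\<bar> \<partial>M) \<le> sqrt (\<integral>x. (u x)^2 \<partial>M) * sqrt (\<integral>x. (v x)^2 \<partial>M)"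
proof -
  define U where "U = (\<integral>x. (u x)^2 \<partial>M)"
  define V where "V = (\<integral>x. (v x)^2 \<partial>M)"
  have U0: "0 \<le> U" "0 \<le> V" unfolding U_def V_def by (auto intro: integral_nonneg_AE)
  have cs: "(\<integral>\<^sup>+x. ennreal \<bar>u x\<bar> * ennreal \<bar>v x\<bar> \<partial>M)\<^sup>2
      \<le> (\<integral>\<^sup>+x. (ennreal \<bar>u x\<bar>)^2 \<partial>M) * (\<integral>\<^sup>+x. (ennreal \<bar>v x\<bar>)^2 \<partial>M)"
    by (rule Cauchy_Schwarz_nn_integral) measurable
  have e1: "(\<integral>\<^sup>+x. (ennreal \<bar>u x\<bar>)^2 \<partial>M) = ennreal U"
  proof -
    have "(\<integral>\<^sup>+x. (ennreal \<bar>u x\<bar>)^2 \<partial>M) = (\<integral>\<^sup>+x. ennreal ((u x)^2) \<partial>M)"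
      by (simp add: ennreal_power)
    also have "\<dots> = ennreal U" unfolding U_def using iu by (intro nn_integral_eq_integral) auto
    finally show ?thesis .
  qed
  have e2: "(\<integral>\<^sup>+x. (ennreal \<bar>v x\<bar>)^2 \<partial>M) = ennreal V"
  proof -
    have "(\<integral>\<^sup>+x. (ennreal \<bar>v x\<bar>)^2 \<partial>M) = (\<integral>\<^sup>+x. ennreal ((v x)^2) \<partial>M)"
      by (simp add: ennreal_power)
    also have "\<dots> = ennreal V" unfolding V_def using iv by (intro nn_integral_eq_integral) auto
    finally show ?thesis .
  qed
  have e3: "(\<integral>\<^sup>+x. ennreal \<bar>u x\<bar> * ennreal \<bar>v x\<bar> \<partial>M) = (\<integral>\<^sup>+x. ennreal (norm (u x * v x)) \<partial>M)"
    by (simp add: ennreal_mult abs_mult)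
  define X where "X = (\<integral>\<^sup>+x. ennreal (norm (u x * v x)) \<partial>M)"
  have X2: "X^2 \<le> ennreal (U * V)"
    using cs unfolding e1 e2 e3 X_def using U0 by (simp add: ennreal_mult)
  have "X^2 < top" using X2 by (rule le_less_trans) simp
  then have Xfin: "X < top" by (simp add: power_less_top_ennreal)
  show i: "integrable M (\<lambda>x. u x * v x)"
    using Xfin unfolding X_def by (subst integrable_iff_bounded) auto
  define I where "I = (\<integral>x. \<bar>u x * v x\<bar> \<partial>M)"
  have I0: "0 \<le> I" unfolding I_def by simp
  have "X = ennreal I" unfolding X_def I_def real_norm_def using i
    by (intro nn_integral_eq_integral) auto
  then have "ennreal (I^2) \<le> ennreal (U * V)" using X2 I0 by (simp add: ennreal_power)
  then have "I^2 \<le> U * V" using U0 by (simp add: ennreal_le_iff)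
  then have "I \<le> sqrt (U * V)" by (rule real_le_rsqrt)
  then show "(\<integral>x. \<bar>u x * v x\<bar> \<partial>M) \<le> sqrt (\<integral>x. (u x)^2 \<partial>M) * sqrt (\<integral>x. (v x)^2 \<partial>M)"
    unfolding I_def U_def V_def by (simp add: real_sqrt_mult)
qed

lemma weighted_nn_integral_kernel_op_le:
  fixes k :: "'a::euclidean_space \<Rightarrow> 'a \<Rightarrow> real"
  assumes km[measurable]: "(\<lambda>(x,y). k x y) \<in> borel_measurable (lborel \<Otimes>\<^sub>M lborel)"
    and knn: "\<And>x y. 0 \<le> k x y"
    and f[measurable]: "f \<in> borel_measurable borel"
    and w[measurable]: "w \<in> borel_measurable borel" and wnn: "\<And>y. 0 \<le> w y"
  shows "(\<integral>\<^sup>+y. ennreal (w y * \<bar>kernel_op k f y\<bar>) \<partial>lborel)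
     \<le> (\<integral>\<^sup>+x. ennreal \<bar>f x\<bar> * (\<integral>\<^sup>+y. ennreal (w y * k x y) \<partial>lborel) \<partial>lborel)"
proof -
  have pt: "ennreal \<bar>kernel_op k f y\<bar> \<le> (\<integral>\<^sup>+x. ennreal (k x y * \<bar>f x\<bar>) \<partial>lborel)" for y
  proof (cases "integrable lborel (\<lambda>x. k x y * f x)")
    case True
    have "ennreal \<bar>kernel_op k f y\<bar> \<le> (\<integral>\<^sup>+x. ennreal (norm (k x y * f x)) \<partial>lborel)"
      using integral_norm_bound_ennreal[OF True] by (simp add: kernel_op_def)
    also have "\<dots> = (\<integral>\<^sup>+x. ennreal (k x y * \<bar>f x\<bar>) \<partial>lborel)"
      using knn by (simp add: abs_mult)
    finally show ?thesis .
  next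
    case False
    then show ?thesis by (simp add: kernel_op_def not_integrable_integral_eq)
  qed
  have "(\<integral>\<^sup>+y. ennreal (w y * \<bar>kernel_op k f y\<bar>) \<partial>lborel)
      \<le> (\<integral>\<^sup>+y. ennreal (w y) * (\<integral>\<^sup>+x. ennreal (k x y * \<bar>f x\<bar>) \<partial>lborel) \<partial>lborel)"
    using pt wnn by (auto intro!: nn_integral_mono mult_left_mono simp: ennreal_mult)
  also have "\<dots> = (\<integral>\<^sup>+y. (\<integral>\<^sup>+x. ennreal (w y * k x y * \<bar>f x\<bar>) \<partial>lborel) \<partial>lborel)"
    using wnn knn by (simp add: nn_integral_cmult[symmetric] ennreal_mult mult.assoc)
  also have "\<dots> = (\<integral>\<^sup>+x. (\<integral>\<^sup>+y. ennreal (w y * k x y * \<bar>f x\<bar>) \<partial>lborel) \<partial>lborel)"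
    by (rule lborel_pair.Fubini') measurable
  also have "\<dots> = (\<integral>\<^sup>+x. ennreal \<bar>f x\<bar> * (\<integral>\<^sup>+y. ennreal (w y * k x y) \<partial>lborel) \<partial>lborel)"
    using wnn knn
      by (simp add: nn_integral_cmult[symmetric] ennreal_mult mult.commute mult.left_commute)
  finally show ?thesis .
qed

section \<open>Perturbation kernels\<close>

lemma L2kernelD:
  assumes "L2kernel k"
  shows "(\<lambda>(x,y). k x y) \<in> borel_measurable (lborel \<Otimes>\<^sub>M lborel)"
    and "(\<integral>\<^sup>+z. ennreal ((k (fst z) (snd z))^2) \<partial>(lborel \<Otimes>\<^sub>M lborel)) = ennreal ((L2norm k)^2)"
proof -
  have m: "(\<lambda>z. k (fst z) (snd z)) \<in> borel_measurable (lborel \<Otimes>\<^sub>M lborel)"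
    and i: "integrable (lborel \<Otimes>\<^sub>M lborel) (\<lambda>z. (k (fst z) (snd z))^2)"
    using assms by (auto simp: L2kernel_def lborel_prod)
  show "(\<lambda>(x,y). k x y) \<in> borel_measurable (lborel \<Otimes>\<^sub>M lborel)"
    using m by (simp add: case_prod_beta')
  have "(L2norm k)^2 = (\<integral>z. (k (fst z) (snd z))^2 \<partial>(lborel \<Otimes>\<^sub>M lborel))"
    by (simp add: L2norm_def lborel_prod)
  then show "(\<integral>\<^sup>+z. ennreal ((k (fst z) (snd z))^2) \<partial>(lborel \<Otimes>\<^sub>M lborel)) = ennreal ((L2norm k)^2)"
    using i by (simp add: nn_integral_eq_integral)
qed

lemma L2norm_nonneg: "0 \<le> L2norm k"
  by (simp add: L2norm_def)

lemma L2kernel_scale_add: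
  assumes k: "L2kernel k" and l: "L2kernel l"
  shows "L2kernel (\<lambda>x y. c * k x y + l x y)"
    and "L2norm (\<lambda>x y. c * k x y + l x y) \<le> sqrt 2 * (\<bar>c\<bar> * L2norm k + L2norm l)"
proof -
  let ?M = "lborel :: ('a \<times> 'a) measure"
  let ?k = "\<lambda>z. k (fst z) (snd z)" and ?l = "\<lambda>z. l (fst z) (snd z)"
  have [measurable]: "?k \<in> borel_measurable ?M" "?l \<in> borel_measurable ?M"
    and ik: "integrable ?M (\<lambda>z. (?k z)^2)" and il: "integrable ?M (\<lambda>z. (?l z)^2)"
    using k l by (auto simp: L2kernel_def)
  have pt: "(c * ?k z + ?l z)^2 \<le> 2 * c^2 * (?k z)^2 + 2 * (?l z)^2" for z
    using square_sum_le[of "c * ?k z" "?l z"] by (simp add: power_mult_distrib)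
  have ib: "integrable ?M (\<lambda>z. 2 * c^2 * (?k z)^2 + 2 * (?l z)^2)" using ik il by simp
  have i: "integrable ?M (\<lambda>z. (c * ?k z + ?l z)^2)"
    by (rule Bochner_Integration.integrable_bound[OF ib]) (auto intro: order_trans[OF _ pt])
  then show "L2kernel (\<lambda>x y. c * k x y + l x y)" by (simp add: L2kernel_def)
  have "(\<integral>z. (c * ?k z + ?l z)^2 \<partial>?M) \<le> (\<integral>z. 2 * c^2 * (?k z)^2 + 2 * (?l z)^2 \<partial>?M)"
    using i ib pt by (intro integral_mono) auto
  also have "\<dots> = 2 * c^2 * (\<integral>z. (?k z)^2 \<partial>?M) + 2 * (\<integral>z. (?l z)^2 \<partial>?M)"
    using ik il by simp
  finally have "L2norm (\<lambda>x y. c * k x y + l x y)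
      \<le> sqrt (2 * c^2 * (\<integral>z. (?k z)^2 \<partial>?M) + 2 * (\<integral>z. (?l z)^2 \<partial>?M))"
    unfolding L2norm_def by (rule real_sqrt_le_mono)
  also have "\<dots> \<le> sqrt (2 * c^2 * (\<integral>z. (?k z)^2 \<partial>?M)) + sqrt (2 * (\<integral>z. (?l z)^2 \<partial>?M))"
    by (intro sqrt_add_le_add_sqrt) auto
  also have "\<dots> = sqrt 2 * (\<bar>c\<bar> * L2norm k + L2norm l)"
    by (simp add: L2norm_def real_sqrt_mult algebra_simps)
  finally show "L2norm (\<lambda>x y. c * k x y + l x y) \<le> sqrt 2 * (\<bar>c\<bar> * L2norm k + L2norm l)" .
qed

lemma L2norm_first_order_perturbation_small:
  assumes kd: "L2kernel kd" and r: "\<And>\<delta>. 0 \<le> \<delta> \<Longrightarrow> \<delta> < \<delta>bar \<Longrightarrow> L2kernel (r \<delta>)"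
    and r0: "\<And>x y. r 0 x y = 0" and r_small: "((\<lambda>\<delta>. L2norm (r \<delta>) / \<delta>) \<longlongrightarrow> 0) (at_right 0)"
    and \<epsilon>: "0 < \<epsilon>"
  obtains \<delta>1 where "0 < \<delta>1"
    "\<And>\<delta>. 0 \<le> \<delta> \<Longrightarrow> \<delta> < \<delta>1 \<Longrightarrow> \<delta> < \<delta>bar \<Longrightarrow>
       L2kernel (\<lambda>x y. \<delta> * kd x y + r \<delta> x y) \<and> L2norm (\<lambda>x y. \<delta> * kd x y + r \<delta> x y) \<le> \<epsilon>"
proof -
  have "eventually (\<lambda>\<delta>. dist (L2norm (r \<delta>) / \<delta>) 0 < 1) (at_right 0)"
    using r_small by (rule tendstoD) simp
  then obtain \<delta>2 where \<delta>2: "0 < \<delta>2" and \<delta>2P: "\<And>\<delta>. 0 < \<delta> \<Longrightarrow> \<delta> < \<delta>2 \<Longrightarrow> \<bar>L2norm (r \<delta>) / \<delta>\<bar> < 1"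
    by (auto simp: eventually_at_right_field)
  have r_le: "L2norm (r \<delta>) \<le> \<delta>" if "0 \<le> \<delta>" "\<delta> < \<delta>2" for \<delta>
  proof (cases "\<delta> = 0")
    case True
    have "r 0 = (\<lambda>x y. 0)" using r0 by (simp add: fun_eq_iff)
    then show ?thesis using True by (simp add: L2norm_def)
  next
    case False
    then show ?thesis using \<delta>2P[of \<delta>] that by (simp add: divide_less_eq abs_less_iff)
  qed
  define c where "c = sqrt 2 * (L2norm kd + 1)"
  have c: "0 < c" using L2norm_nonneg[of kd] by (simp add: c_def add_nonneg_pos)
  show ?thesis
  proof (rule that[of "min \<delta>2 (\<epsilon> / c)"])
    show "0 < min \<delta>2 (\<epsilon> / c)" using \<delta>2 \<epsilon> c by simp
    fix \<delta> assume \<delta>: "0 \<le> \<delta>" "\<delta> < min \<delta>2 (\<epsilon> / c)" "\<delta> < \<delta>bar"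
    note kr = L2kernel_scale_add[OF kd r[OF \<delta>(1,3)], of \<delta>]
    have "L2norm (\<lambda>x y. \<delta> * kd x y + r \<delta> x y) \<le> sqrt 2 * (\<delta> * L2norm kd + L2norm (r \<delta>))"
      using kr(2) \<delta>(1) by simp
    also have "\<dots> \<le> sqrt 2 * (\<delta> * L2norm kd + \<delta>)"
      using r_le[of \<delta>] \<delta> by (intro mult_left_mono add_left_mono) auto
    also have "\<dots> = \<delta> * c" by (simp add: c_def algebra_simps)
    also have "\<dots> \<le> \<epsilon>" using \<delta>(2) c
      by (simp add: pos_less_divide_eq less_imp_le mult.commute)
    finally show "L2kernel (\<lambda>x y. \<delta> * kd x y + r \<delta> x y) \<and> L2norm (\<lambda>x y. \<delta> * kd x y + r \<delta> x y) \<le> \<epsilon>"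
      using kr(1) by simp
  qed
qed

section \<open>Dissipative flows\<close>

lemma flow_energy_decreasing:
  fixes b :: "'a::euclidean_space \<Rightarrow> 'a" and \<theta> :: "real \<Rightarrow> 'a \<Rightarrow> 'a"
  assumes c2: "c2 > 0" and diss: "\<And>x. inner (b x) x \<le> c1 - c2 * (norm x)^2"
    and flow0: "\<And>x. \<theta> 0 x = x"
    and flow: "\<And>x t. t \<ge> 0 \<Longrightarrow>
                 ((\<lambda>s. \<theta> s x) has_vector_derivative b (\<theta> t x)) (at t within {0..})"
  shows "exp (2 * c2) * ((norm (\<theta> 1 x))^2 - c1 / c2) \<le> (norm x)^2 - c1 / c2"
proof -
  define g where "g = (\<lambda>s. \<theta> s x)"
  define \<phi> where "\<phi> = (\<lambda>u. exp (2 * c2 * u) * (g u \<bullet> g u - c1 / c2))"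
  define E where "E = (\<lambda>t. exp (2 * c2 * t) * (2 * c2 * (g t \<bullet> g t - c1 / c2) + 2 * (b (g t) \<bullet> g t)))"
  have hd: "(g has_derivative (\<lambda>h. h *\<^sub>R b (g t))) (at t within {0..1})" if "0 \<le> t" for t
  proof -
    have "(g has_vector_derivative b (g t)) (at t within {0..1})"
      using has_vector_derivative_within_subset[OF flow[OF that, of x]] unfolding g_def by auto
    then show ?thesis by (simp add: has_vector_derivative_def)
  qed
  have d\<phi>: "(\<phi> has_derivative (\<lambda>h. h * E t)) (at t within {0..1})" if "0 \<le> t" "t \<le> 1" for t
    unfolding \<phi>_def E_def
    by (rule has_derivative_eq_rhs, (rule derivative_eq_intros hd that refl | simp)+)
       (auto simp: fun_eq_iff algebra_simps inner_commute)
  obtain \<xi> where "\<phi> 1 - \<phi> 0 = 1 * E \<xi>"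
    using mvt_simple[of 0 1 \<phi> "\<lambda>t h. h * E t"] d\<phi> by auto
  moreover have "E \<xi> \<le> 0"
  proof -
    have "b (g \<xi>) \<bullet> g \<xi> \<le> c1 - c2 * (g \<xi> \<bullet> g \<xi>)"
      using diss[of "g \<xi>"] by (simp add: power2_norm_eq_inner)
    moreover have "2 * c2 * (g \<xi> \<bullet> g \<xi> - c1 / c2) = 2 * c2 * (g \<xi> \<bullet> g \<xi>) - 2 * c1"
      using c2 by (simp add: field_simps)
    ultimately show ?thesis unfolding E_def by (simp add: mult_nonneg_nonpos)
  qed
  ultimately have "\<phi> 1 \<le> \<phi> 0" by simp
  then show ?thesis by (simp add: \<phi>_def g_def flow0 power2_norm_eq_inner)
qed

lemma flow_sq_norm_bound:
  fixes b :: "'a::euclidean_space \<Rightarrow> 'a" and \<theta> :: "real \<Rightarrow> 'a \<Rightarrow> 'a"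
  assumes c2: "c2 > 0" and diss: "\<And>x. inner (b x) x \<le> c1 - c2 * (norm x)^2"
    and flow0: "\<And>x. \<theta> 0 x = x"
    and flow: "\<And>x t. t \<ge> 0 \<Longrightarrow>
                 ((\<lambda>s. \<theta> s x) has_vector_derivative b (\<theta> t x)) (at t within {0..})"
  shows "(norm (\<theta> 1 x))^2 \<le> exp (-2 * c2) * (norm x)^2 + \<bar>c1\<bar> / c2"
proof -
  define q where "q = exp (-2 * c2)"
  have q: "0 < q" "q \<le> 1" and e: "q * exp (2 * c2) = 1" using c2
    by (simp_all add: q_def flip: exp_add)
  have "(norm (\<theta> 1 x))^2 - c1 / c2 = q * (exp (2 * c2) * ((norm (\<theta> 1 x))^2 - c1 / c2))"
    using e by (simp add: mult.assoc[symmetric])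
  also have "\<dots> \<le> q * ((norm x)^2 - c1 / c2)"
    using flow_energy_decreasing[OF c2 diss flow0 flow, of x] q by (intro mult_left_mono) auto
  also have "\<dots> = q * (norm x)^2 - q * (c1 / c2)" by (simp add: algebra_simps)
  finally have "(norm (\<theta> 1 x))^2 \<le> q * (norm x)^2 + (1 - q) * (c1 / c2)"
    using left_diff_distrib[of 1 q "c1 / c2"] by linarith
  moreover have "(1 - q) * (c1 / c2) \<le> (1 - q) * (\<bar>c1\<bar> / c2)"
    using q c2 by (intro mult_left_mono divide_right_mono) auto
  moreover have "(1 - q) * (\<bar>c1\<bar> / c2) \<le> \<bar>c1\<bar> / c2"
    using q c2 by (intro mult_left_le_one_le) auto
  ultimately show ?thesis by (simp add: q_def)
qed

section \<open>Gaussian kernels with a Lyapunov function\<close>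

locale gaussian_kernel =
  fixes \<kappa> :: "'a::euclidean_space \<Rightarrow> 'a \<Rightarrow> real" and \<theta>1 :: "'a \<Rightarrow> 'a" and D :: "'a set"
    and lam0 C0 a A :: real
  assumes Dm[measurable]: "D \<in> sets borel"
    and \<kappa>m[measurable]: "(\<lambda>(x,y). \<kappa> x y) \<in> borel_measurable (lborel \<Otimes>\<^sub>M lborel)"
    and lam0: "0 < lam0" and C0: "1 \<le> C0"
    and lower: "\<And>x y. exp (- ((norm (\<theta>1 x - y))^2) / lam0) / C0 \<le> \<kappa> x y"
    and upper: "\<And>x y. \<kappa> x y \<le> C0 * exp (- lam0 * (norm (\<theta>1 x - y))^2)"
    and flow_bound: "\<And>x. (norm (\<theta>1 x))^2 \<le> a * (norm x)^2 + A"
    and a: "0 \<le> a" "a < 1" and A: "0 \<le> A"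
    and Dfin: "emeasure lborel D < \<infinity>"
    and kernel_pres: "integral_preserving D \<kappa>"
begin

definition vol_unit_ball :: real where "vol_unit_ball = measure lborel (cball (0::'a) 1)"

lemma vol_unit_ball_pos: "0 < vol_unit_ball" unfolding vol_unit_ball_def by simp

lemma \<kappa>_nonneg: "0 \<le> \<kappa> x y"
proof -
  have "0 \<le> exp (- ((norm (\<theta>1 x - y))^2) / lam0) / C0" using C0 by simp
  then show ?thesis using lower[of x y] by linarith
qed

lemma \<kappa>_le_C0: "\<kappa> x y \<le> C0"
proof -
  have "exp (- lam0 * (norm (\<theta>1 x - y))^2) \<le> 1" using lam0 by simp
  then have "C0 * exp (- lam0 * (norm (\<theta>1 x - y))^2) \<le> C0 * 1"
    using C0 by (intro mult_left_mono) auto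
  then show ?thesis using upper[of x y] by linarith
qed

lemma \<kappa>_section_measurable[measurable]: "(\<lambda>x. \<kappa> x y) \<in> borel_measurable borel"
  by measurable

lemma kernel_op_measurable[measurable]:
  assumes [measurable]: "f \<in> borel_measurable borel"
  shows "kernel_op \<kappa> f \<in> borel_measurable borel"
proof -
  have "(\<lambda>y. \<integral>x. \<kappa> x y * f x \<partial>lborel) \<in> borel_measurable lborel"
    by (rule lborel.borel_measurable_lebesgue_integral) measurable
  then show ?thesis by (simp add: kernel_op_def[abs_def])
qed

lemma kernel_op_integrable:
  assumes [measurable]: "f \<in> borel_measurable borel" and i: "integrable lborel f"
  shows "integrable lborel (\<lambda>x. \<kappa> x y * f x)"
proof -
  have i2: "integrable lborel (\<lambda>x. C0 * f x)" using i by simp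
  show ?thesis
  proof (rule Bochner_Integration.integrable_bound[OF i2])
    show "(\<lambda>x. \<kappa> x y * f x) \<in> borel_measurable lborel" by measurable
    show "AE x in lborel. norm (\<kappa> x y * f x) \<le> norm (C0 * f x)"
    proof (rule AE_I2)
      fix x
      have "\<kappa> x y * \<bar>f x\<bar> \<le> C0 * \<bar>f x\<bar>"
        by (rule mult_right_mono[OF \<kappa>_le_C0]) simp
      then show "norm (\<kappa> x y * f x) \<le> norm (C0 * f x)" using C0 \<kappa>_nonneg[of x y]
        by (simp add: abs_mult)
    qed
  qed
qed

lemma transfer_eq_kernel_op:
  assumes [measurable]: "f \<in> borel_measurable borel"
  shows "transfer \<kappa> f = kernel_op \<kappa> f"
  unfolding transfer_def kernel_op_def by (auto simp: fun_eq_iff intro!: integral_completion) 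

lemma kernel_op_nonneg: "(\<And>x. 0 \<le> f x) \<Longrightarrow> 0 \<le> kernel_op \<kappa> f y"
  unfolding kernel_op_def by (auto intro!: integral_nonneg_AE simp: \<kappa>_nonneg)

lemma kernel_op_abs_le:
  assumes [measurable]: "f \<in> borel_measurable borel" and i: "integrable lborel f"
  shows "\<bar>kernel_op \<kappa> f y\<bar> \<le> C0 * (\<integral>x. \<bar>f x\<bar> \<partial>lborel)"
proof -
  have "\<bar>kernel_op \<kappa> f y\<bar> \<le> (\<integral>x. \<bar>\<kappa> x y * f x\<bar> \<partial>lborel)"
    unfolding kernel_op_def by (rule integral_abs_bound)
  also have "\<dots> \<le> (\<integral>x. C0 * \<bar>f x\<bar> \<partial>lborel)"
  proof (rule integral_mono)
    show "integrable lborel (\<lambda>x. \<bar>\<kappa> x y * f x\<bar>)"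
      using kernel_op_integrable[OF assms]
      by simp
    show "integrable lborel (\<lambda>x. C0 * \<bar>f x\<bar>)" using i by simp
    fix x
    have "\<kappa> x y * \<bar>f x\<bar> \<le> C0 * \<bar>f x\<bar>"
      by (rule mult_right_mono[OF \<kappa>_le_C0]) simp
    then show "\<bar>\<kappa> x y * f x\<bar> \<le> C0 * \<bar>f x\<bar>"
      using \<kappa>_nonneg[of x y]
      by (simp add: abs_mult)
  qed
  finally show ?thesis by simp
qed

lemma kernel_op_diff:
  assumes [measurable]: "f \<in> borel_measurable borel" "g \<in> borel_measurable borel"
    and "integrable lborel f" "integrable lborel g"
  shows "kernel_op \<kappa> (\<lambda>x. f x - g x) y = kernel_op \<kappa> f y - kernel_op \<kappa> g y"
  using kernel_op_integrable[OF assms(1,3)] kernel_op_integrable[OF assms(2,4)]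
  unfolding kernel_op_def by (simp add: right_diff_distrib)

lemma kernel_op_mass:
  assumes f: "f \<in> strong_borel D"
  shows "integrable lborel (kernel_op \<kappa> f)" "(\<integral>y. kernel_op \<kappa> f y \<partial>lborel) = (\<integral>x. f x \<partial>lborel)"
proof -
  note [measurable] = strong_borelD(1)[OF f]
  have p: "integrable lebesgue (transfer \<kappa> f)"
    "(LINT y|lebesgue. transfer \<kappa> f y) = (LINT x|lebesgue. f x)"
    using integral_preservingD[OF kernel_pres strong_borel_in_strong_space[OF Dm f]] by auto
  then show "integrable lborel (kernel_op \<kappa> f)"
    unfolding transfer_eq_kernel_op[OF strong_borelD(1)[OF f]]
      by (subst (asm) integrable_completion) auto
  show "(\<integral>y. kernel_op \<kappa> f y \<partial>lborel) = (\<integral>x. f x \<partial>lborel)"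
    using p(2) unfolding transfer_eq_kernel_op[OF strong_borelD(1)[OF f]]
    by (simp add: integral_completion)
qed

definition kernel_mass :: "'a \<Rightarrow> ennreal" where "kernel_mass x = (\<integral>\<^sup>+y. ennreal (\<kappa> x y) \<partial>lborel)"

lemma kernel_mass_measurable[measurable]: "kernel_mass \<in> borel_measurable borel"
proof -
  have "(\<lambda>x. \<integral>\<^sup>+y. ennreal (\<kappa> x y) \<partial>lborel) \<in> borel_measurable lborel"
    using lborel.borel_measurable_nn_integral_fst[of "\<lambda>z. ennreal (\<kappa> (fst z) (snd z))" lborel]
    by (simp add: case_prod_beta')
  then show ?thesis unfolding kernel_mass_def[abs_def] by simp
qed

lemma integral_eq_kernel_mass:
  assumes g: "g \<in> strong_borel D" and gnn: "\<And>x. 0 \<le> g x"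
  shows "ennreal (\<integral>x. g x \<partial>lborel) = (\<integral>\<^sup>+x. ennreal (g x) * kernel_mass x \<partial>lborel)"
proof -
  note [measurable] = strong_borelD(1)[OF g]
  have ig: "integrable lborel g" using strong_borel_integrable[OF g] by simp
  have "ennreal (\<integral>x. g x \<partial>lborel) = ennreal (\<integral>y. kernel_op \<kappa> g y \<partial>lborel)"
    using kernel_op_mass[OF g] by simp
  also have "\<dots> = (\<integral>\<^sup>+y. ennreal (kernel_op \<kappa> g y) \<partial>lborel)"
    using kernel_op_mass(1)[OF g] kernel_op_nonneg[of g] gnn
      by (intro nn_integral_eq_integral[symmetric]) auto
  also have "\<dots> = (\<integral>\<^sup>+y. (\<integral>\<^sup>+x. ennreal (\<kappa> x y * g x) \<partial>lborel) \<partial>lborel)"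
  proof (rule nn_integral_cong)
    fix y
    show "ennreal (kernel_op \<kappa> g y) = (\<integral>\<^sup>+x. ennreal (\<kappa> x y * g x) \<partial>lborel)"
      unfolding kernel_op_def
        using kernel_op_integrable[OF strong_borelD(1)[OF g] ig, of y] gnn \<kappa>_nonneg
      by (intro nn_integral_eq_integral[symmetric]) auto
  qed
  also have "\<dots> = (\<integral>\<^sup>+x. (\<integral>\<^sup>+y. ennreal (\<kappa> x y * g x) \<partial>lborel) \<partial>lborel)"
    by (rule lborel_pair.Fubini') measurable
  also have "\<dots> = (\<integral>\<^sup>+x. ennreal (g x) * kernel_mass x \<partial>lborel)"
    unfolding kernel_mass_def using gnn \<kappa>_nonneg
    by (simp add: nn_integral_cmult[symmetric] ennreal_mult mult.commute)
  finally show ?thesis .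
qed

text \<open>Mass preservation applied to \<open>1\<^sub>S\<close>: \<open>|S| = \<integral>\<^sub>S kernel_mass\<close>, impossible if \<open>kernel_mass > 1\<close> on a
  non-null \<open>S\<close>.\<close>
lemma null_set_if_kernel_mass_gt_1:
  assumes S[measurable]: "S \<in> sets borel" and sub: "S \<subseteq> cball 0 n"
    and gt: "\<And>x. x \<in> S \<Longrightarrow> 1 < kernel_mass x"
  shows "AE x in lborel. x \<notin> S"
proof (rule ccontr)
  assume na: "\<not> (AE x in lborel. x \<notin> S)"
  have "emeasure lborel S \<le> emeasure lborel (cball (0::'a) n)" using sub
    by (rule emeasure_mono) simp
  then have fin: "emeasure lborel S < \<infinity>"
    using emeasure_lborel_cball_finite[of "0::'a" n] by (rule le_less_trans)
  have "emeasure lborel S = ennreal (\<integral>x. indicator S x \<partial>lborel)"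
    using fin by (simp add: emeasure_eq_ennreal_measure less_top)
  also have "\<dots> = (\<integral>\<^sup>+x. ennreal (indicator S x) * kernel_mass x \<partial>lborel)"
    by (rule integral_eq_kernel_mass[OF indicator_strong_borel[OF Dm S sub]]) simp
  finally have eq: "emeasure lborel S = (\<integral>\<^sup>+x. ennreal (indicator S x) * kernel_mass x \<partial>lborel)" .
  have "(\<integral>\<^sup>+x. indicator S x \<partial>lborel) < (\<integral>\<^sup>+x. ennreal (indicator S x) * kernel_mass x \<partial>lborel)"
  proof (rule nn_integral_less)
    show "(\<integral>\<^sup>+x. indicator S x \<partial>lborel) \<noteq> \<infinity>" using fin
      by simp
    show "AE x in lborel. indicator S x \<le> ennreal (indicator S x) * kernel_mass x"
      using gt by (intro AE_I2) (auto simp: indicator_def less_imp_le)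
    show "\<not> (AE x in lborel. ennreal (indicator S x) * kernel_mass x \<le> indicator S x)"
    proof
      assume "AE x in lborel. ennreal (indicator S x) * kernel_mass x \<le> indicator S x"
      then have "AE x in lborel. x \<notin> S"
        by eventually_elim (use gt in \<open>fastforce simp: indicator_def not_le[symmetric]\<close>)
      with na show False by simp
    qed
  qed measurable
  with eq show False by simp
qed

lemma kernel_mass_le_1: "AE x in lborel. kernel_mass x \<le> 1"
proof -
  have "AE x in lborel. x \<notin> {x \<in> cball 0 (real n). 1 < kernel_mass x}" for n :: nat
    by (rule null_set_if_kernel_mass_gt_1) auto
  then have "AE x in lborel. \<forall>n::nat. x \<notin> {x \<in> cball 0 (real n). 1 < kernel_mass x}"
    unfolding AE_all_countable by blast
  then show ?thesis
  proof eventually_elim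
    case (elim x)
    obtain n :: nat where "norm x \<le> real n" using real_arch_simple by blast
    with elim[rule_format, of n] show ?case by (auto simp: not_less)
  qed
qed

lemma nn_integral_sq_norm_gaussian_finite:
  "(\<integral>\<^sup>+z. ennreal (sq_norm z * exp (- lam0 * (norm (z::'a))^2)) \<partial>lborel) < \<infinity>"
proof -
  have pt: "sq_norm z * exp (- lam0 * (norm z)^2) \<le> (2/lam0) * exp (- (lam0/2) * (norm z)^2)" for z :: 'a
  proof -
    define t where "t = (norm z)^2"
    have t0: "0 \<le> t" by (simp add: t_def)
    have "lam0 * t / 2 \<le> exp (lam0 * t / 2)"
      using exp_ge_add_one_self[of "lam0 * t / 2"] by linarith
    then have "t \<le> (2/lam0) * exp (lam0 * t / 2)" using lam0 by (simp add: field_simps)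
    then have "t * exp (- lam0 * t) \<le> (2/lam0) * exp (lam0 * t / 2) * exp (- lam0 * t)"
      by (rule mult_right_mono) simp
    also have "\<dots> = (2/lam0) * exp (- (lam0/2) * t)"
      by (simp add: mult.assoc exp_add[symmetric])
    finally show ?thesis by (simp add: sq_norm_def t_def)
  qed
  have "(\<integral>\<^sup>+z. ennreal (sq_norm z * exp (- lam0 * (norm (z::'a))^2)) \<partial>lborel)
      \<le> (\<integral>\<^sup>+z. ennreal (2/lam0) * ennreal (exp (- (lam0/2) * (norm (z::'a))^2)) \<partial>lborel)"
    using pt lam0 by (intro nn_integral_mono) (simp add: ennreal_mult[symmetric] ennreal_leI)
  also have "\<dots> = ennreal (2/lam0) * (\<integral>\<^sup>+z. ennreal (exp (- (lam0/2) * (norm (z::'a))^2)) \<partial>lborel)"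
    by (rule nn_integral_cmult) measurable
  also have "\<dots> < \<infinity>"
    using nn_integral_gaussian_finite[of "lam0/2", where 'a='a] lam0
      by (simp add: ennreal_mult_less_top)
  finally show ?thesis .
qed

definition gauss_moment :: real where
  "gauss_moment = enn2real (\<integral>\<^sup>+z. ennreal (sq_norm z * exp (- lam0 * (norm (z::'a))^2)) \<partial>lborel)"

lemma nn_integral_gauss_moment:
  "(\<integral>\<^sup>+y. ennreal (sq_norm (y - c) * exp (- lam0 * (norm (y - c :: 'a))^2)) \<partial>lborel) = ennreal gauss_moment"
proof -
  have "(\<integral>\<^sup>+y. ennreal (sq_norm (y - c) * exp (- lam0 * (norm (y - c))^2)) \<partial>lborel)
      = (\<integral>\<^sup>+z. ennreal (sq_norm z * exp (- lam0 * (norm (z::'a))^2)) \<partial>lborel)"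
    by (rule nn_integral_lborel_translate[where f="\<lambda>z. ennreal (sq_norm z * exp (- lam0 * (norm z)^2))"])
       measurable
  also have "\<dots> = ennreal gauss_moment"
    using nn_integral_sq_norm_gaussian_finite unfolding gauss_moment_def by (simp add: less_top)
  finally show ?thesis .
qed

lemma gauss_moment_nonneg: "0 \<le> gauss_moment"
  by (simp add: gauss_moment_def)

lemma nn_integral_sq_norm_kernel_le:
  assumes mass: "kernel_mass x \<le> 1" and e: "0 < e"
  shows "(\<integral>\<^sup>+y. ennreal (sq_norm y * \<kappa> x y) \<partial>lborel)
    \<le> ennreal ((1 + e) * sq_norm (\<theta>1 x) + (1 + 1/e) * C0 * gauss_moment)"
proof -
  define c where "c = \<theta>1 x"
  define G where "G = (\<lambda>y. sq_norm (y - c) * exp (- lam0 * (norm (y - c))^2))"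
  have pt: "ennreal (sq_norm y * \<kappa> x y)
    \<le> ennreal ((1 + e) * sq_norm c) * ennreal (\<kappa> x y) + ennreal ((1 + 1/e) * C0) * ennreal (G y)" for y
  proof -
    have u: "\<kappa> x y \<le> C0 * exp (- lam0 * (norm (y - c))^2)"
      using upper[of x y] by (simp add: c_def norm_minus_commute)
    have "sq_norm y * \<kappa> x y \<le> ((1 + e) * sq_norm c + (1 + 1/e) * sq_norm (y - c)) * \<kappa> x y"
      using sq_norm_split[OF e, of y c] \<kappa>_nonneg by (rule mult_right_mono)
    also have "\<dots> \<le> (1 + e) * sq_norm c * \<kappa> x y + ((1 + 1/e) * C0) * G y"
      using mult_left_mono[OF u, of "(1 + 1/e) * sq_norm (y - c)"] e
      by (simp add: G_def algebra_simps)
    finally show ?thesis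
      using e C0 \<kappa>_nonneg[of x y]
      by (simp add: G_def ennreal_mult[symmetric] ennreal_plus[symmetric] ennreal_leI del: ennreal_plus)
  qed
  have "(\<integral>\<^sup>+y. ennreal (sq_norm y * \<kappa> x y) \<partial>lborel)
      \<le> (\<integral>\<^sup>+y. ennreal ((1 + e) * sq_norm c) * ennreal (\<kappa> x y)
         + ennreal ((1 + 1/e) * C0) * ennreal (G y) \<partial>lborel)"
    by (intro nn_integral_mono pt)
  also have "\<dots> = ennreal ((1 + e) * sq_norm c) * kernel_mass x + ennreal ((1 + 1/e) * C0) * ennreal gauss_moment"
    using nn_integral_gauss_moment[of c] unfolding kernel_mass_def G_def
    by (subst nn_integral_add) (auto simp: nn_integral_cmult)
  also have "\<dots> \<le> ennreal ((1 + e) * sq_norm c) * 1 + ennreal ((1 + 1/e) * C0) * ennreal gauss_moment"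
    using mass by (intro add_mono mult_left_mono) auto
  also have "\<dots> = ennreal ((1 + e) * sq_norm c + (1 + 1/e) * C0 * gauss_moment)"
    using e C0 gauss_moment_nonneg
    by (simp add: ennreal_mult[symmetric] ennreal_plus[symmetric] del: ennreal_plus)
  finally show ?thesis unfolding c_def .
qed

lemma lyapunov_drift:
  obtains \<gamma> K where "0 \<le> \<gamma>" "\<gamma> < 1" "1 \<le> K"
    "AE x in lborel. (\<integral>\<^sup>+y. ennreal (sq_norm y * \<kappa> x y) \<partial>lborel) \<le> ennreal (\<gamma> * sq_norm x + K)"
proof
  define e where "e = (1 - a) / 2"
  have e: "0 < e" using a by (simp add: e_def)
  show "0 \<le> (1 + e) * a" using a e by simp
  have "a * (1 - a) \<le> 1 * (1 - a)" using a by (intro mult_right_mono) auto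
  then show "(1 + e) * a < 1" using a by (simp add: e_def field_simps)
  show "1 \<le> (1 + e) * A + (1 + 1/e) * C0 * gauss_moment + 1"
    using e A C0 gauss_moment_nonneg by simp
  show "AE x in lborel. (\<integral>\<^sup>+y. ennreal (sq_norm y * \<kappa> x y) \<partial>lborel)
      \<le> ennreal ((1 + e) * a * sq_norm x + ((1 + e) * A + (1 + 1/e) * C0 * gauss_moment + 1))"
    using kernel_mass_le_1
  proof eventually_elim
    case (elim x)
    have "(1 + e) * sq_norm (\<theta>1 x) \<le> (1 + e) * (a * sq_norm x + A)"
      using flow_bound[of x] e by (intro mult_left_mono) (auto simp: sq_norm_def)
    then have "ennreal ((1 + e) * sq_norm (\<theta>1 x) + (1 + 1/e) * C0 * gauss_moment)
      \<le> ennreal ((1 + e) * a * sq_norm x + ((1 + e) * A + (1 + 1/e) * C0 * gauss_moment + 1))"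
      by (intro ennreal_leI) (simp add: algebra_simps)
    with nn_integral_sq_norm_kernel_le[OF elim e] show ?case by (rule order_trans)
  qed
qed

lemma minorization:
  assumes R: "0 \<le> R"
  obtains \<eta>0 where "0 < \<eta>0" "\<And>x y. sq_norm x \<le> R \<Longrightarrow> norm y \<le> 1 \<Longrightarrow> \<eta>0 \<le> \<kappa> x y"
proof -
  define s where "s = sqrt (a * R + A)"
  define \<eta>0 where "\<eta>0 = exp (- ((s + 1)^2) / lam0) / C0"
  have "0 < \<eta>0" using C0 by (simp add: \<eta>0_def)
  moreover have "\<eta>0 \<le> \<kappa> x y" if "sq_norm x \<le> R" "norm y \<le> 1" for x y
  proof -
    have "(norm (\<theta>1 x))^2 \<le> a * R + A"
      using flow_bound[of x] that(1) a by (smt (verit) sq_norm_def mult_left_mono)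
    then have n1: "norm (\<theta>1 x) \<le> s" unfolding s_def by (rule real_le_rsqrt)
    have "norm (\<theta>1 x - y) \<le> norm (\<theta>1 x) + norm y" by (rule norm_triangle_ineq4)
    also have "\<dots> \<le> s + 1" using n1 that(2) by simp
    finally have "(norm (\<theta>1 x - y))^2 \<le> (s + 1)^2" by (simp add: power_mono)
    then have "- ((s + 1)^2) / lam0 \<le> - ((norm (\<theta>1 x - y))^2) / lam0"
      using lam0 by (simp add: divide_right_mono)
    then have "exp (- ((s + 1)^2) / lam0) / C0 \<le> exp (- ((norm (\<theta>1 x - y))^2) / lam0) / C0"
      using C0 by (intro divide_right_mono) auto
    then show ?thesis using lower[of x y] unfolding \<eta>0_def by linarith
  qed
  ultimately show ?thesis using that by blast
qed

end

locale drift_kernel = gaussian_kernel +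
  fixes \<gamma> K :: real
  assumes \<gamma>: "0 \<le> \<gamma>" "\<gamma> < 1" and K: "1 \<le> K"
    and drift: "AE x in lborel. (\<integral>\<^sup>+y. ennreal (sq_norm y * \<kappa> x y) \<partial>lborel) \<le> ennreal (\<gamma> * sq_norm x + K)"
begin

lemma nn_integral_sq_norm_kernel_op_le:
  assumes f: "f \<in> strong_borel D"
  shows "(\<integral>\<^sup>+y. ennreal (sq_norm y * \<bar>kernel_op \<kappa> f y\<bar>) \<partial>lborel)
     \<le> ennreal (\<gamma> * (\<integral>x. sq_norm x * \<bar>f x\<bar> \<partial>lborel) + K * (\<integral>x. \<bar>f x\<bar> \<partial>lborel))"
proof -
  note [measurable] = strong_borelD(1)[OF f]
  have "(\<integral>\<^sup>+y. ennreal (sq_norm y * \<bar>kernel_op \<kappa> f y\<bar>) \<partial>lborel)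
      \<le> (\<integral>\<^sup>+x. ennreal \<bar>f x\<bar> * (\<integral>\<^sup>+y. ennreal (sq_norm y * \<kappa> x y) \<partial>lborel) \<partial>lborel)"
    by (rule weighted_nn_integral_kernel_op_le[OF \<kappa>m \<kappa>_nonneg strong_borelD(1)[OF f] sq_norm_measurable sq_norm_nonneg])
  also have "\<dots> \<le> (\<integral>\<^sup>+x. ennreal \<bar>f x\<bar> * ennreal (\<gamma> * sq_norm x + K) \<partial>lborel)"
    using drift by (intro nn_integral_mono_AE) (auto elim!: eventually_mono intro: mult_left_mono)
  also have "\<dots> = (\<integral>\<^sup>+x. ennreal (\<gamma> * (sq_norm x * \<bar>f x\<bar>) + K * \<bar>f x\<bar>) \<partial>lborel)"
    using \<gamma> K by (intro nn_integral_cong) (simp add: ennreal_mult[symmetric] algebra_simps)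
  also have "\<dots> = ennreal (\<integral>x. \<gamma> * (sq_norm x * \<bar>f x\<bar>) + K * \<bar>f x\<bar> \<partial>lborel)"
    using strong_borel_integrable[OF f] \<gamma> K by (intro nn_integral_eq_integral) auto
  also have "\<dots> = ennreal (\<gamma> * (\<integral>x. sq_norm x * \<bar>f x\<bar> \<partial>lborel) + K * (\<integral>x. \<bar>f x\<bar> \<partial>lborel))"
    using strong_borel_integrable[OF f] by simp
  finally show ?thesis .
qed

lemma abs_kernel_op_le: "\<bar>kernel_op \<kappa> f y\<bar> \<le> kernel_op \<kappa> (\<lambda>x. \<bar>f x\<bar>) y"
proof (cases "integrable lborel (\<lambda>x. \<kappa> x y * f x)")
  case True
  have "\<bar>kernel_op \<kappa> f y\<bar> \<le> (\<integral>x. \<bar>\<kappa> x y * f x\<bar> \<partial>lborel)"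
    unfolding kernel_op_def by (rule integral_abs_bound)
  also have "\<dots> = kernel_op \<kappa> (\<lambda>x. \<bar>f x\<bar>) y"
    unfolding kernel_op_def using \<kappa>_nonneg by (simp add: abs_mult)
  finally show ?thesis .
next
  case False
  then show ?thesis
    by (simp add: kernel_op_def not_integrable_integral_eq kernel_op_nonneg[unfolded kernel_op_def])
qed

lemma kernel_op_L1_le:
  assumes f: "f \<in> strong_borel D"
  shows "integrable lborel (\<lambda>y. \<bar>kernel_op \<kappa> f y\<bar>)" "(\<integral>y. \<bar>kernel_op \<kappa> f y\<bar> \<partial>lborel) \<le> (\<integral>x. \<bar>f x\<bar> \<partial>lborel)"
proof -
  note [measurable] = strong_borelD(1)[OF f]
  have fa: "(\<lambda>x. \<bar>f x\<bar>) \<in> strong_borel D" by (rule strong_borel_abs[OF Dm f])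
  show "integrable lborel (\<lambda>y. \<bar>kernel_op \<kappa> f y\<bar>)"
    using kernel_op_mass(1)[OF f]
    by simp
  have "(\<integral>y. \<bar>kernel_op \<kappa> f y\<bar> \<partial>lborel) \<le> (\<integral>y. kernel_op \<kappa> (\<lambda>x. \<bar>f x\<bar>) y \<partial>lborel)"
    using kernel_op_mass(1)[OF f] kernel_op_mass(1)[OF fa] abs_kernel_op_le
      by (intro integral_mono) auto
  also have "\<dots> = (\<integral>x. \<bar>f x\<bar> \<partial>lborel)"
    by (rule kernel_op_mass(2)[OF fa])
  finally show "(\<integral>y. \<bar>kernel_op \<kappa> f y\<bar> \<partial>lborel) \<le> (\<integral>x. \<bar>f x\<bar> \<partial>lborel)" .
qed

lemma kernel_op_moment_le:
  assumes f: "f \<in> strong_borel D"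
  shows "integrable lborel (\<lambda>y. sq_norm y * \<bar>kernel_op \<kappa> f y\<bar>)"
    "(\<integral>y. sq_norm y * \<bar>kernel_op \<kappa> f y\<bar> \<partial>lborel) \<le> \<gamma> * (\<integral>x. sq_norm x * \<bar>f x\<bar> \<partial>lborel) + K * (\<integral>x. \<bar>f x\<bar> \<partial>lborel)"
proof -
  note [measurable] = strong_borelD(1)[OF f]
  have fin: "(\<integral>\<^sup>+y. ennreal (sq_norm y * \<bar>kernel_op \<kappa> f y\<bar>) \<partial>lborel) < \<infinity>"
    using nn_integral_sq_norm_kernel_op_le[OF f] by (rule le_less_trans) simp
  show i: "integrable lborel (\<lambda>y. sq_norm y * \<bar>kernel_op \<kappa> f y\<bar>)"
    using fin by (subst integrable_iff_bounded) (auto simp: abs_mult)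
  have "ennreal (\<integral>y. sq_norm y * \<bar>kernel_op \<kappa> f y\<bar> \<partial>lborel) = (\<integral>\<^sup>+y. ennreal (sq_norm y * \<bar>kernel_op \<kappa> f y\<bar>) \<partial>lborel)"
    using i by (intro nn_integral_eq_integral[symmetric]) auto
  also have "\<dots> \<le> ennreal (\<gamma> * (\<integral>x. sq_norm x * \<bar>f x\<bar> \<partial>lborel) + K * (\<integral>x. \<bar>f x\<bar> \<partial>lborel))"
    by (rule nn_integral_sq_norm_kernel_op_le[OF f])
  finally show "(\<integral>y. sq_norm y * \<bar>kernel_op \<kappa> f y\<bar> \<partial>lborel) \<le> \<gamma> * (\<integral>x. sq_norm x * \<bar>f x\<bar> \<partial>lborel) + K * (\<integral>x. \<bar>f x\<bar> \<partial>lborel)"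
    using \<gamma> K
      by (subst (asm) ennreal_le_iff) (auto intro!: add_nonneg_nonneg mult_nonneg_nonneg integral_nonneg_AE)
qed

lemma kernel_op_strong_borel:
  assumes f: "f \<in> strong_borel D"
  shows "kernel_op \<kappa> f \<in> strong_borel D"
proof -
  note [measurable] = strong_borelD(1)[OF f]
  have i1: "integrable lborel (\<lambda>y. \<bar>kernel_op \<kappa> f y\<bar> + sq_norm y * \<bar>kernel_op \<kappa> f y\<bar>)"
    using kernel_op_L1_le(1)[OF f] kernel_op_moment_le(1)[OF f] by auto
  have weighted: "integrable lborel (\<lambda>y. (1 + sq_norm y) * kernel_op \<kappa> f y)"
  proof (rule Bochner_Integration.integrable_bound[OF i1])
    show "AE y in lborel. norm ((1 + sq_norm y) * kernel_op \<kappa> f y) \<le> norm (\<bar>kernel_op \<kappa> f y\<bar> + sq_norm y * \<bar>kernel_op \<kappa> f y\<bar>)"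
    proof (rule AE_I2)
      fix y :: 'a
      have h: "\<bar>1 + sq_norm y\<bar> = 1 + sq_norm y" using sq_norm_nonneg[of y] by simp
      have e1: "\<bar>(1 + sq_norm y) * kernel_op \<kappa> f y\<bar> = (1 + sq_norm y) * \<bar>kernel_op \<kappa> f y\<bar>"
        by (simp only: abs_mult h)
      have e2: "(1 + sq_norm y) * \<bar>kernel_op \<kappa> f y\<bar> = \<bar>kernel_op \<kappa> f y\<bar> + sq_norm y * \<bar>kernel_op \<kappa> f y\<bar>"
        by (simp add: distrib_right)
      show "norm ((1 + sq_norm y) * kernel_op \<kappa> f y) \<le> norm (\<bar>kernel_op \<kappa> f y\<bar> + sq_norm y * \<bar>kernel_op \<kappa> f y\<bar>)"
        unfolding real_norm_def e1 e2 by simp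
    qed
  qed measurable
  define c where "c = C0 * (\<integral>x. \<bar>f x\<bar> \<partial>lborel)"
  have i2: "integrable lborel (\<lambda>y. c^2 * indicator D y)"
    using Dfin by (intro Bochner_Integration.integrable_mult_right integrable_real_indicator) auto
  have local_sq: "integrable lborel (\<lambda>y. (indicator D y * kernel_op \<kappa> f y)^2)"
  proof (rule Bochner_Integration.integrable_bound[OF i2])
    show "(\<lambda>y. (indicator D y * kernel_op \<kappa> f y)^2) \<in> borel_measurable lborel"
      by measurable
    show "AE y in lborel. norm ((indicator D y * kernel_op \<kappa> f y)^2) \<le> norm (c^2 * indicator D y)"
    proof (rule AE_I2)
      fix y :: 'a
      have tb: "\<bar>kernel_op \<kappa> f y\<bar> \<le> c" unfolding c_def
        by (rule kernel_op_abs_le) (auto simp: strong_borel_integrable[OF f])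
      have "(kernel_op \<kappa> f y)^2 \<le> c^2" using power_mono[OF tb abs_ge_zero, of 2] by simp
      then show "norm ((indicator D y * kernel_op \<kappa> f y)^2) \<le> norm (c^2 * indicator D y)"
        by (auto simp: indicator_def)
    qed
  qed
  show ?thesis using weighted local_sq by (auto simp: strong_borel_def)
qed

end

section \<open>Harris' theorem\<close>

text \<open>The bookkeeping of Harris' theorem (Hairer and Mattingly): \<open>S, J\<close> are the mass and second
  moment of \<open>|f|\<close>, \<open>X, Y\<close> those of \<open>|L f|\<close>; in the norm \<open>S + \<beta> J\<close> with \<open>\<beta> = e/(4K)\<close> the
  drift bound and the minorization alternative together contract by \<open>1 - e/4\<close>.\<close>
lemma harris_contraction_arith:
  fixes S J X Y \<gamma> K R \<eta> e :: real
  assumes S: "0 \<le> S" and J: "0 \<le> J" and \<gamma>: "0 \<le> \<gamma>" and K: "1 \<le> K"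
    and e: "0 < e" "e \<le> \<eta>" "e \<le> 1 - \<gamma>" and R: "16 * K / (1 - \<gamma>) \<le> R"
    and X_le: "X \<le> S" and Y_le: "Y \<le> \<gamma> * J + K * S"
    and alt: "X \<le> S - \<eta> * S / 2 \<or> R * S / 4 \<le> J"
  shows "X + e / (4 * K) * Y \<le> (1 - e / 4) * (S + e / (4 * K) * J)"
proof -
  define \<beta> where "\<beta> = e / (4 * K)"
  define \<alpha> where "\<alpha> = 1 - e / 4"
  have \<beta>: "0 < \<beta>" and \<beta>K: "\<beta> * K = e / 4" using e K
    by (simp_all add: \<beta>_def)
  have ag: "\<gamma> \<le> \<alpha>" using e by (simp add: \<alpha>_def)
  have agR: "8 * K \<le> (\<alpha> - \<gamma>) * R"
  proof -
    have g1: "0 < 1 - \<gamma>" using e by simp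
    have "3 * (1 - \<gamma>) / 4 * (16 * K / (1 - \<gamma>)) \<le> (\<alpha> - \<gamma>) * R"
      using e R g1 K by (intro mult_mono) (auto simp: \<alpha>_def)
    moreover have "3 * (1 - \<gamma>) / 4 * (16 * K / (1 - \<gamma>)) = 12 * K" using g1
      by (simp add: field_simps)
    ultimately show ?thesis using K by linarith
  qed
  have bY: "\<beta> * Y \<le> \<beta> * \<gamma> * J + e / 4 * S"
  proof -
    have "\<beta> * Y \<le> \<beta> * (\<gamma> * J + K * S)" using Y_le \<beta>
      by (intro mult_left_mono) auto
    also have "\<dots> = \<beta> * \<gamma> * J + (\<beta> * K) * S" by (simp add: algebra_simps)
    finally show ?thesis unfolding \<beta>K .
  qed
  have bgJ: "\<beta> * \<gamma> * J \<le> \<alpha> * (\<beta> * J)"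
    using mult_right_mono[OF ag, of "\<beta> * J"] \<beta> J by (simp add: algebra_simps)
  from alt have "X + \<beta> * Y \<le> \<alpha> * S + \<alpha> * (\<beta> * J)"
  proof
    assume "X \<le> S - \<eta> * S / 2"
    moreover have "e * S \<le> \<eta> * S" using e S by (intro mult_right_mono) auto
    ultimately have "X + \<beta> * Y \<le> S - e * S / 2 + \<beta> * \<gamma> * J + e / 4 * S"
      using bY
      by linarith
    then show ?thesis using bgJ by (simp add: \<alpha>_def algebra_simps)
  next
    assume B: "R * S / 4 \<le> J"
    have "e / 2 * S = \<beta> * (8 * K) * S / 4" using \<beta>K by (simp add: algebra_simps)
    also have "\<dots> \<le> \<beta> * ((\<alpha> - \<gamma>) * R) * S / 4"
      using agR \<beta> S by (intro divide_right_mono mult_right_mono mult_left_mono) auto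
    also have "\<dots> = \<beta> * (\<alpha> - \<gamma>) * (R * S / 4)" by (simp add: algebra_simps)
    also have "\<dots> \<le> \<beta> * (\<alpha> - \<gamma>) * J" using B \<beta> ag
      by (intro mult_left_mono) auto
    finally have "e / 2 * S \<le> \<beta> * (\<alpha> - \<gamma>) * J" .
    then show ?thesis using bY X_le by (simp add: \<alpha>_def algebra_simps)
  qed
  then show ?thesis by (simp add: \<alpha>_def \<beta>_def algebra_simps)
qed

context drift_kernel
begin

lemma kernel_op_ge_minorant:
  assumes mn: "\<And>x y. sq_norm x \<le> R \<Longrightarrow> norm y \<le> 1 \<Longrightarrow> \<eta>0 \<le> \<kappa> x y"
    and g: "g \<in> strong_borel D" and gnn: "\<And>x. 0 \<le> g x"
  shows "\<eta>0 * (\<integral>x. indicator {x. sq_norm x \<le> R} x * g x \<partial>lborel) * indicator (cball 0 1) y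
    \<le> kernel_op \<kappa> g y"
proof (cases "norm y \<le> 1")
  case True
  note [measurable] = strong_borelD(1)[OF g]
  have gC: "(\<lambda>x. indicator {x. sq_norm x \<le> R} x * g x) \<in> strong_borel D"
    by (rule strong_borel_indicator_mult[OF Dm g]) measurable
  have "\<eta>0 * (\<integral>x. indicator {x. sq_norm x \<le> R} x * g x \<partial>lborel)
      = (\<integral>x. \<eta>0 * (indicator {x. sq_norm x \<le> R} x * g x) \<partial>lborel)" by simp
  also have "\<dots> \<le> kernel_op \<kappa> g y" unfolding kernel_op_def
  proof (rule integral_mono)
    show "integrable lborel (\<lambda>x. \<eta>0 * (indicator {x. sq_norm x \<le> R} x * g x))"
      using strong_borel_integrable(1)[OF gC] by simp
    show "integrable lborel (\<lambda>x. \<kappa> x y * g x)"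
      using kernel_op_integrable strong_borel_integrable(1)[OF g] by simp
    show "\<eta>0 * (indicator {x. sq_norm x \<le> R} x * g x) \<le> \<kappa> x y * g x" for x
      using mn[of x y] True gnn[of x] \<kappa>_nonneg[of x y]
        by (auto simp: indicator_def intro: mult_right_mono)
  qed
  finally show ?thesis using True by simp
next
  case False
  then show ?thesis using kernel_op_nonneg[of g y] gnn by simp
qed

text \<open>Coupling: the common part \<open>m\<close> of the images of \<open>u\<close> and \<open>v\<close> cancels in \<open>L (u - v)\<close>.\<close>
lemma L1_kernel_op_diff_le:
  assumes u: "u \<in> strong_borel D" "\<And>x. 0 \<le> u x" and v: "v \<in> strong_borel D" "\<And>x. 0 \<le> v x"
    and m: "integrable lborel m" and mu: "\<And>y. m y \<le> kernel_op \<kappa> u y" and mv: "\<And>y. m y \<le> kernel_op \<kappa> v y"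
  shows "(\<integral>y. \<bar>kernel_op \<kappa> (\<lambda>x. u x - v x) y\<bar> \<partial>lborel)
    \<le> (\<integral>x. u x \<partial>lborel) + (\<integral>x. v x \<partial>lborel) - 2 * (\<integral>y. m y \<partial>lborel)"
proof -
  note [measurable] = strong_borelD(1)[OF u(1)] strong_borelD(1)[OF v(1)]
  have pt: "\<bar>kernel_op \<kappa> (\<lambda>x. u x - v x) y\<bar> \<le> kernel_op \<kappa> u y + kernel_op \<kappa> v y - 2 * m y" for y
    using kernel_op_diff[of u v y] strong_borel_integrable(1)[OF u(1)] strong_borel_integrable(1)[OF v(1)]
      mu[of y] mv[of y] by simp
  have "(\<integral>y. \<bar>kernel_op \<kappa> (\<lambda>x. u x - v x) y\<bar> \<partial>lborel)
      \<le> (\<integral>y. kernel_op \<kappa> u y + kernel_op \<kappa> v y - 2 * m y \<partial>lborel)"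
    using kernel_op_mass(1)[OF strong_borel_diff[OF Dm u(1) v(1)]] kernel_op_mass(1)[OF u(1)]
      kernel_op_mass(1)[OF v(1)] m pt by (intro integral_mono) auto
  also have "\<dots> = (\<integral>x. u x \<partial>lborel) + (\<integral>x. v x \<partial>lborel) - 2 * (\<integral>y. m y \<partial>lborel)"
    using kernel_op_mass[OF u(1)] kernel_op_mass[OF v(1)] m by simp
  finally show ?thesis .
qed

lemma moment_ge_mass_outside:
  assumes f: "f \<in> strong_borel D" and g: "g \<in> strong_borel D" "\<And>x. 0 \<le> g x \<and> g x \<le> \<bar>f x\<bar>"
    and R: "0 \<le> R"
  shows "R * ((\<integral>x. g x \<partial>lborel) - (\<integral>x. indicator {x. sq_norm x \<le> R} x * g x \<partial>lborel))
    \<le> (\<integral>x. sq_norm x * \<bar>f x\<bar> \<partial>lborel)"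
proof -
  note [measurable] = strong_borelD(1)[OF g(1)]
  let ?C = "{x::'a. sq_norm x \<le> R}"
  have iC: "integrable lborel (\<lambda>x. indicator ?C x * g x)"
    by (rule strong_borel_integrable(1)[OF strong_borel_indicator_mult[OF Dm g(1)]]) simp
  have "R * ((\<integral>x. g x \<partial>lborel) - (\<integral>x. indicator ?C x * g x \<partial>lborel))
      = (\<integral>x. R * (g x - indicator ?C x * g x) \<partial>lborel)"
    using iC strong_borel_integrable(1)[OF g(1)] by simp
  also have "\<dots> \<le> (\<integral>x. sq_norm x * \<bar>f x\<bar> \<partial>lborel)"
  proof (rule integral_mono)
    show "integrable lborel (\<lambda>x. R * (g x - indicator ?C x * g x))"
      using iC strong_borel_integrable(1)[OF g(1)] by simp
    show "integrable lborel (\<lambda>x. sq_norm x * \<bar>f x\<bar>)"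
      by (rule strong_borel_integrable(3)[OF f])
    show "R * (g x - indicator ?C x * g x) \<le> sq_norm x * \<bar>f x\<bar>" for x
      using g(2)[of x] R by (cases "x \<in> ?C") (auto intro!: mult_mono)
  qed
  finally show ?thesis .
qed

text \<open>Harris' alternative: a mean zero density either has a definite fraction of its positive and
  negative parts in the region \<open>{sq_norm \<le> R}\<close>, where the minorization lets them overlap, or a
  large second moment.\<close>
lemma L1_contraction_or_large_moment:
  assumes f: "f \<in> strong_borel D" and mean0: "(\<integral>x. f x \<partial>lborel) = 0"
    and R: "0 \<le> R" and e0: "0 \<le> \<eta>0"
    and mn: "\<And>x y. sq_norm x \<le> R \<Longrightarrow> norm y \<le> 1 \<Longrightarrow> \<eta>0 \<le> \<kappa> x y"
  defines "S \<equiv> (\<integral>x. \<bar>f x\<bar> \<partial>lborel)" and "J \<equiv> (\<integral>x. sq_norm x * \<bar>f x\<bar> \<partial>lborel)"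
  shows "(\<integral>y. \<bar>kernel_op \<kappa> f y\<bar> \<partial>lborel) \<le> S - \<eta>0 * vol_unit_ball * S / 2 \<or> R * S / 4 \<le> J"
proof -
  note [measurable] = strong_borelD(1)[OF f]
  define C where "C = {x::'a. sq_norm x \<le> R}"
  define fp where "fp = (\<lambda>x. max (f x) 0)"
  define fn where "fn = (\<lambda>x. max (- f x) 0)"
  have B: "fp \<in> strong_borel D" "fn \<in> strong_borel D"
    unfolding fp_def fn_def using strong_borel_pos_neg[OF Dm f] by auto
  note [measurable] = strong_borelD(1)[OF B(1)] strong_borelD(1)[OF B(2)]
  have nn: "0 \<le> fp x" "0 \<le> fn x" for x by (auto simp: fp_def fn_def)
  have f_eq: "f = (\<lambda>x. fp x - fn x)" and abs_eq: "\<And>x. \<bar>f x\<bar> = fp x + fn x"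
    by (auto simp: fp_def fn_def fun_eq_iff)
  have halves: "(\<integral>x. fp x \<partial>lborel) = S / 2" "(\<integral>x. fn x \<partial>lborel) = S / 2"
    using mean0 strong_borel_integrable(1)[OF B(1)] strong_borel_integrable(1)[OF B(2)]
    unfolding S_def abs_eq by (subst (asm) f_eq; simp)+
  define a where "a = (\<lambda>g. \<integral>x. indicator C x * g x \<partial>lborel :: real)"
  define \<mu> where "\<mu> = min (a fp) (a fn)"
  define m where "m = (\<lambda>y. \<eta>0 * \<mu> * indicator (cball (0::'a) 1) y)"
  have m_le: "m y \<le> kernel_op \<kappa> g y" if "g \<in> strong_borel D" "\<And>x. 0 \<le> g x" "\<mu> \<le> a g" for g y
  proof -
    have "m y \<le> \<eta>0 * a g * indicator (cball (0::'a) 1) y"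
      unfolding m_def using that(3) e0 by (intro mult_right_mono mult_left_mono) auto
    also have "\<dots> \<le> kernel_op \<kappa> g y"
      unfolding a_def C_def by (rule kernel_op_ge_minorant[OF mn that(1,2)])
    finally show ?thesis .
  qed
  have m_int: "integrable lborel m" "(\<integral>y. m y \<partial>lborel) = \<eta>0 * \<mu> * vol_unit_ball"
    unfolding m_def vol_unit_ball_def using emeasure_lborel_cball_finite[of "0::'a" 1] by auto
  have L1: "(\<integral>y. \<bar>kernel_op \<kappa> f y\<bar> \<partial>lborel) \<le> S - 2 * (\<eta>0 * \<mu> * vol_unit_ball)"
    using L1_kernel_op_diff_le[OF B(1) nn(1) B(2) nn(2) m_int(1)] m_le[OF B(1) nn(1)] m_le[OF B(2) nn(2)]
    unfolding f_eq[symmetric] halves m_int(2) by (simp add: \<mu>_def)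
  show ?thesis
  proof (cases "S / 4 \<le> \<mu>")
    case True
    have "\<eta>0 * vol_unit_ball * (S / 4) \<le> \<eta>0 * vol_unit_ball * \<mu>"
      using True e0 vol_unit_ball_pos by (intro mult_left_mono) auto
    then show ?thesis using L1 by (simp add: algebra_simps)
  next
    case False
    then have "S / 4 \<le> S / 2 - a fp \<or> S / 4 \<le> S / 2 - a fn"
      by (auto simp: \<mu>_def min_def split: if_splits)
    then have "R * (S / 4) \<le> R * (S / 2 - a fp) \<or> R * (S / 4) \<le> R * (S / 2 - a fn)"
      using R mult_left_mono by blast
    moreover have "R * (S / 2 - a fp) \<le> J" "R * (S / 2 - a fn) \<le> J"
      using moment_ge_mass_outside[OF f B(1) _ R] moment_ge_mass_outside[OF f B(2) _ R] nn abs_eq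
      unfolding a_def C_def J_def halves by auto
    ultimately show ?thesis by auto
  qed
qed

lemma weighted_L1_split:
  assumes f: "f \<in> strong_borel D" and b: "0 \<le> \<beta>"
  shows "weighted_L1 \<beta> f = (\<integral>x. \<bar>f x\<bar> \<partial>lborel) + \<beta> * (\<integral>x. sq_norm x * \<bar>f x\<bar> \<partial>lborel)"
proof -
  have "weighted_L1 \<beta> f = (\<integral>x. \<bar>f x\<bar> + \<beta> * (sq_norm x * \<bar>f x\<bar>) \<partial>lborel)"
    unfolding weighted_L1_def by (rule Bochner_Integration.integral_cong) (auto simp: algebra_simps)
  also have "\<dots> = (\<integral>x. \<bar>f x\<bar> \<partial>lborel) + \<beta> * (\<integral>x. sq_norm x * \<bar>f x\<bar> \<partial>lborel)"
    using strong_borel_integrable[OF f] by simp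
  finally show ?thesis .
qed

lemma weighted_L1_contraction:
  obtains \<beta> \<alpha> where "0 < \<beta>" "0 \<le> \<alpha>" "\<alpha> < 1"
    "\<And>f. f \<in> strong_borel D \<Longrightarrow> (\<integral>x. f x \<partial>lborel) = 0 \<Longrightarrow>
       weighted_L1 \<beta> (kernel_op \<kappa> f) \<le> \<alpha> * weighted_L1 \<beta> f"
proof -
  define R where "R = 16 * K / (1 - \<gamma>) + 1"
  have R: "0 < R" using K \<gamma> unfolding R_def by (simp add: add_pos_nonneg)
  obtain \<eta>0 where e0: "0 < \<eta>0" and mn: "\<And>x y. sq_norm x \<le> R \<Longrightarrow> norm y \<le> 1 \<Longrightarrow> \<eta>0 \<le> \<kappa> x y"
    using minorization[of R] R by auto
  define e where "e = min (\<eta>0 * vol_unit_ball) (1 - \<gamma>)"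
  have e: "0 < e" "e \<le> \<eta>0 * vol_unit_ball" "e \<le> 1 - \<gamma>"
    using e0 vol_unit_ball_pos \<gamma> by (auto simp: e_def)
  define \<beta> where "\<beta> = e / (4 * K)"
  have \<beta>: "0 < \<beta>" using e K by (simp add: \<beta>_def)
  show ?thesis
  proof (rule that[of \<beta> "1 - e / 4"])
    show "0 < \<beta>" "0 \<le> 1 - e / 4" "1 - e / 4 < 1" using \<beta> e \<gamma> by auto
    fix f assume f: "f \<in> strong_borel D" and mean0: "(\<integral>x. f x \<partial>lborel) = 0"
    have "(\<integral>y. \<bar>kernel_op \<kappa> f y\<bar> \<partial>lborel) + \<beta> * (\<integral>y. sq_norm y * \<bar>kernel_op \<kappa> f y\<bar> \<partial>lborel)
        \<le> (1 - e / 4) * ((\<integral>x. \<bar>f x\<bar> \<partial>lborel) + \<beta> * (\<integral>x. sq_norm x * \<bar>f x\<bar> \<partial>lborel))"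
      unfolding \<beta>_def
    proof (rule harris_contraction_arith[OF _ _ _ K e])
      show "16 * K / (1 - \<gamma>) \<le> R" by (simp add: R_def)
      show "(\<integral>y. \<bar>kernel_op \<kappa> f y\<bar> \<partial>lborel) \<le> (\<integral>x. \<bar>f x\<bar> \<partial>lborel)"
        by (rule kernel_op_L1_le(2)[OF f])
      show "(\<integral>y. sq_norm y * \<bar>kernel_op \<kappa> f y\<bar> \<partial>lborel)
          \<le> \<gamma> * (\<integral>x. sq_norm x * \<bar>f x\<bar> \<partial>lborel) + K * (\<integral>x. \<bar>f x\<bar> \<partial>lborel)"
        by (rule kernel_op_moment_le(2)[OF f])
      show "(\<integral>y. \<bar>kernel_op \<kappa> f y\<bar> \<partial>lborel)
          \<le> (\<integral>x. \<bar>f x\<bar> \<partial>lborel) - \<eta>0 * vol_unit_ball * (\<integral>x. \<bar>f x\<bar> \<partial>lborel) / 2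
        \<or> R * (\<integral>x. \<bar>f x\<bar> \<partial>lborel) / 4 \<le> (\<integral>x. sq_norm x * \<bar>f x\<bar> \<partial>lborel)"
        using L1_contraction_or_large_moment[OF f mean0 _ _ mn] R e0 by auto
    qed (use \<gamma> in \<open>auto intro: integral_nonneg_AE\<close>)
    then show "weighted_L1 \<beta> (kernel_op \<kappa> f) \<le> (1 - e / 4) * weighted_L1 \<beta> f"
      using weighted_L1_split[OF f] weighted_L1_split[OF kernel_op_strong_borel[OF f]] \<beta>
        by simp
  qed
qed

end

section \<open>Small perturbations\<close>

locale perturbed_kernel = drift_kernel +
  fixes kp :: "'a \<Rightarrow> 'a \<Rightarrow> real" and RD :: real
  assumes kp_L2: "L2kernel kp"
    and kp_supp: "\<And>x y. (x, y) \<notin> D \<times> D \<Longrightarrow> kp x y = 0"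
    and DRD: "D \<subseteq> cball 0 RD"
    and perturbed_pres: "integral_preserving D (\<lambda>x y. \<kappa> x y + kp x y)"
begin

definition kp_sq_L2norm :: real where "kp_sq_L2norm = (L2norm kp)^2"

lemma kp_sq_L2norm_nonneg: "0 \<le> kp_sq_L2norm" by (simp add: kp_sq_L2norm_def)

lemma sqrt_kp_sq_L2norm: "sqrt kp_sq_L2norm = L2norm kp"
  by (simp add: kp_sq_L2norm_def L2norm_nonneg)

lemma kp_measurable[measurable]: "(\<lambda>(x,y). kp x y) \<in> borel_measurable (lborel \<Otimes>\<^sub>M lborel)"
  by (rule L2kernelD(1)[OF kp_L2])

lemma nn_integral_kp_sq: "(\<integral>\<^sup>+z. ennreal ((kp (fst z) (snd z))^2) \<partial>(lborel \<Otimes>\<^sub>M lborel)) = ennreal kp_sq_L2norm"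
  unfolding kp_sq_L2norm_def by (rule L2kernelD(2)[OF kp_L2])

definition col_sq :: "'a \<Rightarrow> ennreal" where "col_sq y = (\<integral>\<^sup>+x. ennreal ((kp x y)^2) \<partial>lborel)"

lemma col_sq_measurable[measurable]: "col_sq \<in> borel_measurable borel"
proof -
  have "(\<lambda>y. \<integral>\<^sup>+x. ennreal ((kp x y)^2) \<partial>lborel) \<in> borel_measurable lborel"
    using lborel.borel_measurable_nn_integral_fst[of "\<lambda>z. ennreal ((kp (snd z) (fst z))^2)" lborel]
    by (simp add: case_prod_beta')
  then show ?thesis unfolding col_sq_def[abs_def] by simp
qed

lemma nn_integral_col_sq: "(\<integral>\<^sup>+y. col_sq y \<partial>lborel) = ennreal kp_sq_L2norm"
proof -
  have "(\<integral>\<^sup>+y. col_sq y \<partial>lborel) = (\<integral>\<^sup>+y. (\<integral>\<^sup>+x. ennreal ((kp (fst (x,y)) (snd (x,y)))^2) \<partial>lborel) \<partial>lborel)"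
    unfolding col_sq_def by simp
  also have "\<dots> = (\<integral>\<^sup>+z. ennreal ((kp (fst z) (snd z))^2) \<partial>(lborel \<Otimes>\<^sub>M lborel))"
    by (rule lborel_pair.nn_integral_snd) measurable
  finally show ?thesis using nn_integral_kp_sq by simp
qed

lemma col_sq_finite_AE: "AE y in lborel. col_sq y < \<infinity>"
proof -
  have "AE y in lborel. col_sq y \<noteq> \<infinity>"
    by (rule nn_integral_PInf_AE) (auto simp: nn_integral_col_sq)
  then show ?thesis by (simp add: less_top)
qed

definition col_sq_real :: "'a \<Rightarrow> real" where "col_sq_real y = enn2real (col_sq y)"

lemma kp_section_measurable[measurable]: "(\<lambda>x. kp x y) \<in> borel_measurable borel"
  by measurable

lemma col_sq_real_eq:
  assumes "col_sq y < \<infinity>"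
  shows "integrable lborel (\<lambda>x. (kp x y)^2)" "col_sq_real y = (\<integral>x. (kp x y)^2 \<partial>lborel)" "col_sq y = ennreal (col_sq_real y)"
proof -
  show i: "integrable lborel (\<lambda>x. (kp x y)^2)"
    using assms by (subst integrable_iff_bounded) (auto simp: col_sq_def)
  have "col_sq y = ennreal (\<integral>x. (kp x y)^2 \<partial>lborel)"
    unfolding col_sq_def using i by (intro nn_integral_eq_integral) auto
  then show "col_sq_real y = (\<integral>x. (kp x y)^2 \<partial>lborel)"
    by (simp add: col_sq_real_def)
  then show "col_sq y = ennreal (col_sq_real y)" using \<open>col_sq y = _\<close> by simp
qed

lemma col_sq_real_nonneg: "0 \<le> col_sq_real y" by (simp add: col_sq_real_def)

lemma L2_sq_on_nonneg: "0 \<le> L2_sq_on D h" unfolding L2_sq_on_def by simp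

lemma pert_integrand_bound:
  assumes h: "h \<in> strong_borel D" and col_sq: "col_sq y < \<infinity>"
  shows "integrable lborel (\<lambda>x. kp x y * h x)"
    "(\<integral>x. \<bar>kp x y * h x\<bar> \<partial>lborel) \<le> sqrt (col_sq_real y) * sqrt (L2_sq_on D h)"
proof -
  note [measurable] = strong_borelD(1)[OF h]
  have eq: "kp x y * h x = kp x y * (indicator D x * h x)" for x
    using kp_supp[of x y] by (auto simp: indicator_def)
  have m1: "(\<lambda>x. kp x y) \<in> borel_measurable lborel" by measurable
  have m2: "(\<lambda>x. indicator D x * h x) \<in> borel_measurable lborel" by measurable
  note cs = Cauchy_Schwarz_integral[OF m1 m2 col_sq_real_eq(1)[OF col_sq] strong_borelD(3)[OF h]]
  show "integrable lborel (\<lambda>x. kp x y * h x)" unfolding eq by (rule cs(1))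
  show "(\<integral>x. \<bar>kp x y * h x\<bar> \<partial>lborel) \<le> sqrt (col_sq_real y) * sqrt (L2_sq_on D h)"
    unfolding eq L2_sq_on_def col_sq_real_eq(2)[OF col_sq] by (rule cs(2))
qed

definition pert_op :: "('a \<Rightarrow> real) \<Rightarrow> 'a \<Rightarrow> real" where "pert_op h = kernel_op kp h"
definition perturbed_op :: "('a \<Rightarrow> real) \<Rightarrow> 'a \<Rightarrow> real" where "perturbed_op h = kernel_op (\<lambda>x y. \<kappa> x y + kp x y) h"

lemma pert_op_measurable[measurable]:
  assumes [measurable]: "f \<in> borel_measurable borel"
  shows "pert_op f \<in> borel_measurable borel"
proof -
  have "(\<lambda>y. \<integral>x. kp x y * f x \<partial>lborel) \<in> borel_measurable lborel"
    by (rule lborel.borel_measurable_lebesgue_integral) measurable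
  then show ?thesis by (simp add: pert_op_def kernel_op_def[abs_def])
qed

lemma perturbed_op_measurable[measurable]:
  assumes [measurable]: "f \<in> borel_measurable borel"
  shows "perturbed_op f \<in> borel_measurable borel"
proof -
  have "(\<lambda>y. \<integral>x. (\<kappa> x y + kp x y) * f x \<partial>lborel) \<in> borel_measurable lborel"
    by (rule lborel.borel_measurable_lebesgue_integral) measurable
  then show ?thesis by (simp add: perturbed_op_def kernel_op_def[abs_def])
qed

lemma pert_op_outside_D: "y \<notin> D \<Longrightarrow> pert_op h y = 0"
  using kp_supp by (simp add: pert_op_def kernel_op_def)

lemma abs_pert_op_le:
  assumes h: "h \<in> strong_borel D" and col_sq: "col_sq y < \<infinity>"
  shows "\<bar>pert_op h y\<bar> \<le> sqrt (col_sq_real y) * sqrt (L2_sq_on D h)"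
proof -
  have "\<bar>pert_op h y\<bar> \<le> (\<integral>x. \<bar>kp x y * h x\<bar> \<partial>lborel)"
    unfolding pert_op_def kernel_op_def by (rule integral_abs_bound)
  also have "\<dots> \<le> sqrt (col_sq_real y) * sqrt (L2_sq_on D h)"
    by (rule pert_integrand_bound(2)[OF h col_sq])
  finally show ?thesis .
qed

lemma perturbed_op_split:
  assumes h: "h \<in> strong_borel D" and col_sq: "col_sq y < \<infinity>"
  shows "perturbed_op h y = kernel_op \<kappa> h y + pert_op h y"
proof -
  note [measurable] = strong_borelD(1)[OF h]
  have "perturbed_op h y = (\<integral>x. \<kappa> x y * h x + kp x y * h x \<partial>lborel)"
    unfolding perturbed_op_def kernel_op_def by (simp add: distrib_right)
  also have "\<dots> = kernel_op \<kappa> h y + pert_op h y"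
    unfolding pert_op_def kernel_op_def
      using kernel_op_integrable[of h y] strong_borel_integrable(1)[OF h] pert_integrand_bound(1)[OF h col_sq]
      by simp
  finally show ?thesis .
qed

lemma perturbed_op_split_AE:
  assumes h: "h \<in> strong_borel D"
  shows "AE y in lborel. perturbed_op h y = kernel_op \<kappa> h y + pert_op h y"
  using col_sq_finite_AE by eventually_elim (rule perturbed_op_split[OF h])

lemma pert_op_L2:
  assumes h: "h \<in> strong_borel D"
  shows "integrable lborel (\<lambda>y. (pert_op h y)^2)" "(\<integral>y. (pert_op h y)^2 \<partial>lborel) \<le> kp_sq_L2norm * L2_sq_on D h"
proof -
  note [measurable] = strong_borelD(1)[OF h]
  have pt: "AE y in lborel. ennreal ((pert_op h y)^2) \<le> col_sq y * ennreal (L2_sq_on D h)"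
    using col_sq_finite_AE
  proof eventually_elim
    case (elim y)
    have "\<bar>pert_op h y\<bar> \<le> sqrt (col_sq_real y) * sqrt (L2_sq_on D h)"
      by (rule abs_pert_op_le[OF h elim])
    then have "\<bar>pert_op h y\<bar>^2 \<le> (sqrt (col_sq_real y) * sqrt (L2_sq_on D h))^2"
      by (rule power_mono) simp
    also have "\<dots> = col_sq_real y * L2_sq_on D h" using col_sq_real_nonneg L2_sq_on_nonneg
      by (simp add: power_mult_distrib)
    finally have "(pert_op h y)^2 \<le> col_sq_real y * L2_sq_on D h" by simp
    then have "ennreal ((pert_op h y)^2) \<le> ennreal (col_sq_real y * L2_sq_on D h)"
      by (rule ennreal_leI)
    also have "\<dots> = col_sq y * ennreal (L2_sq_on D h)"
      using col_sq_real_eq(3)[OF elim] col_sq_real_nonneg L2_sq_on_nonneg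
      by (simp add: ennreal_mult)
    finally show ?case .
  qed
  have "(\<integral>\<^sup>+y. ennreal ((pert_op h y)^2) \<partial>lborel) \<le> (\<integral>\<^sup>+y. col_sq y * ennreal (L2_sq_on D h) \<partial>lborel)"
    by (rule nn_integral_mono_AE[OF pt])
  also have "\<dots> = ennreal (kp_sq_L2norm * L2_sq_on D h)"
    by (simp add: nn_integral_multc nn_integral_col_sq kp_sq_L2norm_nonneg L2_sq_on_nonneg ennreal_mult)
  finally have le: "(\<integral>\<^sup>+y. ennreal ((pert_op h y)^2) \<partial>lborel) \<le> ennreal (kp_sq_L2norm * L2_sq_on D h)" .
  show i: "integrable lborel (\<lambda>y. (pert_op h y)^2)"
    using le by (subst integrable_iff_bounded) (auto simp: top.not_eq_extremum le_less_trans)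
  have "ennreal (\<integral>y. (pert_op h y)^2 \<partial>lborel) = (\<integral>\<^sup>+y. ennreal ((pert_op h y)^2) \<partial>lborel)"
    using i by (intro nn_integral_eq_integral[symmetric]) auto
  with le have "ennreal (\<integral>y. (pert_op h y)^2 \<partial>lborel) \<le> ennreal (kp_sq_L2norm * L2_sq_on D h)"
    by simp
  then show "(\<integral>y. (pert_op h y)^2 \<partial>lborel) \<le> kp_sq_L2norm * L2_sq_on D h"
    using kp_sq_L2norm_nonneg L2_sq_on_nonneg by (simp add: ennreal_le_iff)
qed

lemma pert_op_square_eq: "(\<lambda>y. (indicator D y * pert_op h y)^2) = (\<lambda>y. (pert_op h y)^2)"
  using pert_op_outside_D by (auto simp: fun_eq_iff indicator_def)

lemma L2_sq_on_pert_op: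
  assumes h: "h \<in> strong_borel D"
  shows "L2_sq_on D (pert_op h) \<le> kp_sq_L2norm * L2_sq_on D h"
proof -
  have "L2_sq_on D (pert_op h) = (\<integral>y. (pert_op h y)^2 \<partial>lborel)"
    unfolding L2_sq_on_def pert_op_square_eq ..
  then show ?thesis using pert_op_L2(2)[OF h] by simp
qed

definition vol_D where "vol_D = measure lborel D"

lemma weighted_L1_pert_op:
  assumes h: "h \<in> strong_borel D" and b: "0 \<le> \<beta>"
  shows "integrable lborel (\<lambda>y. (1 + \<beta> * sq_norm y) * \<bar>pert_op h y\<bar>)"
    "weighted_L1 \<beta> (pert_op h) \<le> (1 + \<beta> * RD^2) * sqrt vol_D * sqrt (L2_sq_on D (pert_op h))"
proof -
  note [measurable] = strong_borelD(1)[OF h]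
  have m1: "(\<lambda>y. indicator D y :: real) \<in> borel_measurable lborel" by measurable
  have m2: "pert_op h \<in> borel_measurable lborel" by measurable
  have i1: "integrable lborel (\<lambda>y. (indicator D y :: real)^2)"
  proof -
    have "(\<lambda>y. (indicator D y :: real)^2) = indicator D"
      by (auto simp: fun_eq_iff indicator_def)
    then show ?thesis using Dfin by simp
  qed
  note cs = Cauchy_Schwarz_integral[OF m1 m2 i1 pert_op_L2(1)[OF h]]
  have int1: "(\<integral>y. (indicator D y :: real)^2 \<partial>lborel) = vol_D"
  proof -
    have "(\<lambda>y. (indicator D y :: real)^2) = indicator D"
      by (auto simp: fun_eq_iff indicator_def)
    then show ?thesis using Dfin by (simp add: vol_D_def)
  qed
  have pt: "(1 + \<beta> * sq_norm y) * \<bar>pert_op h y\<bar> \<le> (1 + \<beta> * RD^2) * \<bar>indicator D y * pert_op h y\<bar>" for y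
  proof (cases "y \<in> D")
    case True
    then have "norm y \<le> RD" using DRD by auto
    then have "sq_norm y \<le> RD^2" unfolding sq_norm_def by (rule power_mono) simp
    then have "1 + \<beta> * sq_norm y \<le> 1 + \<beta> * RD^2" using b
      by (simp add: mult_left_mono)
    then show ?thesis using True by (simp add: mult_right_mono)
  next
    case False
    then show ?thesis by (simp add: pert_op_outside_D)
  qed
  have i2: "integrable lborel (\<lambda>y. (1 + \<beta> * RD^2) * \<bar>indicator D y * pert_op h y\<bar>)"
    using cs(1) by simp
  show i3: "integrable lborel (\<lambda>y. (1 + \<beta> * sq_norm y) * \<bar>pert_op h y\<bar>)"
  proof (rule Bochner_Integration.integrable_bound[OF i2])
    show "(\<lambda>y. (1 + \<beta> * sq_norm y) * \<bar>pert_op h y\<bar>) \<in> borel_measurable lborel"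
      by measurable
    show "AE y in lborel. norm ((1 + \<beta> * sq_norm y) * \<bar>pert_op h y\<bar>) \<le> norm ((1 + \<beta> * RD^2) * \<bar>indicator D y * pert_op h y\<bar>)"
    proof (rule AE_I2)
      fix y :: 'a
      have "0 \<le> (1 + \<beta> * sq_norm y) * \<bar>pert_op h y\<bar>" using b by simp
      then show "norm ((1 + \<beta> * sq_norm y) * \<bar>pert_op h y\<bar>) \<le> norm ((1 + \<beta> * RD^2) * \<bar>indicator D y * pert_op h y\<bar>)"
        using pt[of y] by simp
    qed
  qed
  have "weighted_L1 \<beta> (pert_op h) \<le> (\<integral>y. (1 + \<beta> * RD^2) * \<bar>indicator D y * pert_op h y\<bar> \<partial>lborel)"
    unfolding weighted_L1_def using i2 i3 pt by (intro integral_mono) auto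
  also have "\<dots> = (1 + \<beta> * RD^2) * (\<integral>y. \<bar>indicator D y * pert_op h y\<bar> \<partial>lborel)"
    by simp
  also have "\<dots> \<le> (1 + \<beta> * RD^2) * (sqrt vol_D * sqrt (L2_sq_on D (pert_op h)))"
  proof (rule mult_left_mono)
    show "(\<integral>y. \<bar>indicator D y * pert_op h y\<bar> \<partial>lborel) \<le> sqrt vol_D * sqrt (L2_sq_on D (pert_op h))"
      using cs(2) unfolding int1 by (simp add: L2_sq_on_def pert_op_square_eq)
    show "0 \<le> 1 + \<beta> * RD^2" using b by simp
  qed
  finally show "weighted_L1 \<beta> (pert_op h) \<le> (1 + \<beta> * RD^2) * sqrt vol_D * sqrt (L2_sq_on D (pert_op h))"
    by (simp add: mult.assoc)
qed

lemma pert_op_strong_borel: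
  assumes h: "h \<in> strong_borel D"
  shows "pert_op h \<in> strong_borel D"
proof -
  note [measurable] = strong_borelD(1)[OF h]
  have i: "integrable lborel (\<lambda>y. (1 + 1 * sq_norm y) * \<bar>pert_op h y\<bar>)"
    by (rule weighted_L1_pert_op(1)[OF h]) simp
  have weighted: "integrable lborel (\<lambda>y. (1 + sq_norm y) * pert_op h y)"
    by (rule Bochner_Integration.integrable_bound[OF i]) (auto simp: abs_mult)
  have local_sq: "integrable lborel (\<lambda>y. (indicator D y * pert_op h y)^2)"
    unfolding pert_op_square_eq by (rule pert_op_L2(1)[OF h])
  show ?thesis using weighted local_sq by (auto simp: strong_borel_def)
qed

lemma perturbed_op_strong_borel:
  assumes h: "h \<in> strong_borel D"
  shows "perturbed_op h \<in> strong_borel D"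
proof (rule strong_borel_AE_cong[OF Dm])
  show "(\<lambda>y. kernel_op \<kappa> h y + pert_op h y) \<in> strong_borel D"
    by (rule strong_borel_add[OF Dm kernel_op_strong_borel[OF h] pert_op_strong_borel[OF h]])
  show "perturbed_op h \<in> borel_measurable borel" using strong_borelD(1)[OF h] by measurable
  show "AE x in lborel. perturbed_op h x = kernel_op \<kappa> h x + pert_op h x"
    by (rule perturbed_op_split_AE[OF h])
qed

lemma perturbed_op_mass:
  assumes h: "h \<in> strong_borel D"
  shows "(\<integral>y. perturbed_op h y \<partial>lborel) = (\<integral>x. h x \<partial>lborel)"
proof -
  note [measurable] = strong_borelD(1)[OF h]
  have tr: "transfer (\<lambda>x y. \<kappa> x y + kp x y) h = perturbed_op h"
    unfolding transfer_def perturbed_op_def kernel_op_def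
      by (auto simp: fun_eq_iff intro!: integral_completion)
  have "(LINT y|lebesgue. perturbed_op h y) = (LINT x|lebesgue. h x)"
    using integral_preservingD(2)[OF perturbed_pres strong_borel_in_strong_space[OF Dm h]]
      unfolding tr
      by simp
  then show ?thesis by (simp add: integral_completion)
qed

end

section \<open>The invariant density\<close>

locale contracting_perturbation = perturbed_kernel +
  fixes \<alpha> \<beta> :: real
  assumes \<beta>: "0 < \<beta>" and \<alpha>: "0 \<le> \<alpha>" "\<alpha> < 1"
    and contr: "\<And>f. f \<in> strong_borel D \<Longrightarrow> (\<integral>x. f x \<partial>lborel) = 0 \<Longrightarrow> weighted_L1 \<beta> (kernel_op \<kappa> f) \<le> \<alpha> * weighted_L1 \<beta> f"
    \<comment> \<open>\<open>L2norm kp \<le> \<epsilon>0\<close> for the explicit threshold \<open>\<epsilon>0\<close> of the mixed norm contraction\<close>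
    and small: "L2norm kp * ((1 + \<beta> * RD^2) * sqrt (measure lborel D)
          + (1 - \<alpha>) / (2 * (sqrt 2 * C0 * sqrt (measure lborel D) + 1)) * sqrt 2)
       \<le> (1 + \<alpha>) / 2 * ((1 - \<alpha>) / (2 * (sqrt 2 * C0 * sqrt (measure lborel D) + 1)))"
begin

definition L2_weight where "L2_weight = (1 - \<alpha>) / (2 * (sqrt 2 * C0 * sqrt vol_D + 1))"
definition mixed_norm where "mixed_norm h = weighted_L1 \<beta> h + L2_weight * sqrt (L2_sq_on D h)"

lemma vol_D_nonneg: "0 \<le> vol_D" by (simp add: vol_D_def)

lemma L2_weight_pos: "0 < L2_weight"
  unfolding L2_weight_def using \<alpha> C0 vol_D_nonneg
    by (intro divide_pos_pos) (auto intro!: add_nonneg_pos)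

lemma mixed_norm_nonneg: "0 \<le> mixed_norm h"
  unfolding mixed_norm_def using L2_weight_pos \<beta> L2_sq_on_nonneg[of h]
    by (intro add_nonneg_nonneg weighted_L1_nonneg mult_nonneg_nonneg) auto

lemma L1_le_weighted_L1:
  assumes h: "h \<in> strong_borel D"
  shows "(\<integral>x. \<bar>h x\<bar> \<partial>lborel) \<le> weighted_L1 \<beta> h"
  unfolding weighted_L1_def
    using strong_borel_integrable(2)[OF h] strong_borel_weighted_integrable[OF h, of \<beta>] \<beta>
  by (intro integral_mono) (auto intro!: abs_le_beta_weight)

lemma L2_sq_on_kernel_op:
  assumes h: "h \<in> strong_borel D"
  shows "L2_sq_on D (kernel_op \<kappa> h) \<le> (C0 * (\<integral>x. \<bar>h x\<bar> \<partial>lborel))^2 * vol_D"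
proof -
  note [measurable] = strong_borelD(1)[OF h]
  define c where "c = C0 * (\<integral>x. \<bar>h x\<bar> \<partial>lborel)"
  have "L2_sq_on D (kernel_op \<kappa> h) \<le> (\<integral>y. c^2 * indicator D y \<partial>lborel)"
    unfolding L2_sq_on_def
  proof (rule integral_mono)
    show "integrable lborel (\<lambda>y. (indicator D y * kernel_op \<kappa> h y)^2)"
      using strong_borelD(3)[OF kernel_op_strong_borel[OF h]] .
    show "integrable lborel (\<lambda>y. c^2 * indicator D y)" using Dfin by simp
    fix y :: 'a
    have tb: "\<bar>kernel_op \<kappa> h y\<bar> \<le> c" unfolding c_def
      by (rule kernel_op_abs_le) (auto simp: strong_borel_integrable[OF h])
    have "(kernel_op \<kappa> h y)^2 \<le> c^2" using power_mono[OF tb abs_ge_zero, of 2] by simp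
    then show "(indicator D y * kernel_op \<kappa> h y)^2 \<le> c^2 * indicator D y"
      by (auto simp: indicator_def)
  qed
  also have "\<dots> = c^2 * vol_D" using Dfin by (simp add: vol_D_def)
  finally show ?thesis unfolding c_def .
qed

lemma weighted_L1_perturbed_op:
  assumes h: "h \<in> strong_borel D"
  shows "weighted_L1 \<beta> (perturbed_op h) \<le> weighted_L1 \<beta> (kernel_op \<kappa> h) + weighted_L1 \<beta> (pert_op h)"
proof -
  note [measurable] = strong_borelD(1)[OF h]
  have "weighted_L1 \<beta> (perturbed_op h) = (\<integral>y. (1 + \<beta> * sq_norm y) * \<bar>kernel_op \<kappa> h y + pert_op h y\<bar> \<partial>lborel)"
    unfolding weighted_L1_def using perturbed_op_split_AE[OF h]
      by (intro integral_cong_AE) (auto elim!: eventually_mono)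
  also have "\<dots> \<le> (\<integral>y. (1 + \<beta> * sq_norm y) * \<bar>kernel_op \<kappa> h y\<bar> + (1 + \<beta> * sq_norm y) * \<bar>pert_op h y\<bar> \<partial>lborel)"
  proof (rule integral_mono)
    show "integrable lborel (\<lambda>y. (1 + \<beta> * sq_norm y) * \<bar>kernel_op \<kappa> h y + pert_op h y\<bar>)"
      using strong_borel_weighted_integrable[OF strong_borel_add[OF Dm kernel_op_strong_borel[OF h] pert_op_strong_borel[OF h]], of \<beta>] \<beta>
        by simp
    show "integrable lborel (\<lambda>y. (1 + \<beta> * sq_norm y) * \<bar>kernel_op \<kappa> h y\<bar> + (1 + \<beta> * sq_norm y) * \<bar>pert_op h y\<bar>)"
      using strong_borel_weighted_integrable[OF kernel_op_strong_borel[OF h], of \<beta>] weighted_L1_pert_op(1)[OF h, of \<beta>] \<beta>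
        by simp
    fix y :: 'a
    have "0 \<le> 1 + \<beta> * sq_norm y" using \<beta> by simp
    then show "(1 + \<beta> * sq_norm y) * \<bar>kernel_op \<kappa> h y + pert_op h y\<bar> \<le> (1 + \<beta> * sq_norm y) * \<bar>kernel_op \<kappa> h y\<bar> + (1 + \<beta> * sq_norm y) * \<bar>pert_op h y\<bar>"
      by (metis abs_triangle_ineq distrib_left mult_left_mono)
  qed
  also have "\<dots> = weighted_L1 \<beta> (kernel_op \<kappa> h) + weighted_L1 \<beta> (pert_op h)"
    unfolding weighted_L1_def
      using strong_borel_weighted_integrable[OF kernel_op_strong_borel[OF h], of \<beta>] weighted_L1_pert_op(1)[OF h, of \<beta>] \<beta>
      by simp
  finally show ?thesis .
qed

lemma L2_sq_on_perturbed_op: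
  assumes h: "h \<in> strong_borel D"
  shows "L2_sq_on D (perturbed_op h) \<le> 2 * L2_sq_on D (kernel_op \<kappa> h) + 2 * L2_sq_on D (pert_op h)"
proof -
  note [measurable] = strong_borelD(1)[OF h]
  have "L2_sq_on D (perturbed_op h) = (\<integral>y. (indicator D y * kernel_op \<kappa> h y + indicator D y * pert_op h y)^2 \<partial>lborel)"
    unfolding L2_sq_on_def using perturbed_op_split_AE[OF h]
    by (intro integral_cong_AE) (auto elim!: eventually_mono simp: distrib_left)
  also have "\<dots> \<le> (\<integral>y. 2 * (indicator D y * kernel_op \<kappa> h y)^2 + 2 * (indicator D y * pert_op h y)^2 \<partial>lborel)"
  proof (rule integral_mono)
    show "integrable lborel (\<lambda>y. (indicator D y * kernel_op \<kappa> h y + indicator D y * pert_op h y)^2)"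
      using strong_borelD(3)[OF strong_borel_add[OF Dm kernel_op_strong_borel[OF h] pert_op_strong_borel[OF h]]]
        by (simp add: distrib_left)
    show "integrable lborel (\<lambda>y. 2 * (indicator D y * kernel_op \<kappa> h y)^2 + 2 * (indicator D y * pert_op h y)^2)"
      using strong_borelD(3)[OF kernel_op_strong_borel[OF h]] strong_borelD(3)[OF pert_op_strong_borel[OF h]]
        by simp
    fix y :: 'a show "(indicator D y * kernel_op \<kappa> h y + indicator D y * pert_op h y)^2
        \<le> 2 * (indicator D y * kernel_op \<kappa> h y)^2 + 2 * (indicator D y * pert_op h y)^2" by (rule square_sum_le)
  qed
  also have "\<dots> = 2 * L2_sq_on D (kernel_op \<kappa> h) + 2 * L2_sq_on D (pert_op h)"
    unfolding L2_sq_on_def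
      using strong_borelD(3)[OF kernel_op_strong_borel[OF h]] strong_borelD(3)[OF pert_op_strong_borel[OF h]]
      by simp
  finally show ?thesis .
qed

lemma weighted_L1_perturbed_op_le:
  assumes h: "h \<in> strong_borel D" and h0: "(\<integral>x. h x \<partial>lborel) = 0"
  shows "weighted_L1 \<beta> (perturbed_op h)
    \<le> \<alpha> * weighted_L1 \<beta> h + (1 + \<beta> * RD^2) * sqrt vol_D * L2norm kp * sqrt (L2_sq_on D h)"
proof -
  define c where "c = (1 + \<beta> * RD^2) * sqrt vol_D"
  have c: "0 \<le> c" unfolding c_def using \<beta> vol_D_nonneg by simp
  have "weighted_L1 \<beta> (pert_op h) \<le> c * sqrt (L2_sq_on D (pert_op h))"
    unfolding c_def using weighted_L1_pert_op(2)[OF h, of \<beta>] \<beta> by simp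
  also have "\<dots> \<le> c * sqrt (kp_sq_L2norm * L2_sq_on D h)"
    using L2_sq_on_pert_op[OF h] c by (intro mult_left_mono) auto
  also have "\<dots> = c * L2norm kp * sqrt (L2_sq_on D h)"
    by (simp add: sqrt_kp_sq_L2norm real_sqrt_mult)
  finally show ?thesis
    using weighted_L1_perturbed_op[OF h] contr[OF h h0] unfolding c_def by linarith
qed

lemma sqrt_L2_sq_on_perturbed_op_le:
  assumes h: "h \<in> strong_borel D"
  shows "sqrt (L2_sq_on D (perturbed_op h))
    \<le> sqrt 2 * C0 * sqrt vol_D * weighted_L1 \<beta> h + sqrt 2 * L2norm kp * sqrt (L2_sq_on D h)"
proof -
  define n where "n = weighted_L1 \<beta> h"
  have n: "0 \<le> n" unfolding n_def using \<beta> by (intro weighted_L1_nonneg) simp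
  have "(C0 * (\<integral>x. \<bar>h x\<bar> \<partial>lborel))^2 \<le> (C0 * n)^2"
    using L1_le_weighted_L1[OF h] C0 unfolding n_def by (intro power_mono mult_left_mono) auto
  then have "L2_sq_on D (kernel_op \<kappa> h) \<le> (C0 * n)^2 * vol_D"
    using L2_sq_on_kernel_op[OF h] vol_D_nonneg by (meson mult_right_mono order_trans)
  then have "L2_sq_on D (perturbed_op h) \<le> 2 * ((C0 * n)^2 * vol_D) + 2 * (kp_sq_L2norm * L2_sq_on D h)"
    using L2_sq_on_perturbed_op[OF h] L2_sq_on_pert_op[OF h] by linarith
  then have "sqrt (L2_sq_on D (perturbed_op h)) \<le> sqrt (2 * ((C0 * n)^2 * vol_D) + 2 * (kp_sq_L2norm * L2_sq_on D h))"
    by (rule real_sqrt_le_mono)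
  also have "\<dots> \<le> sqrt (2 * ((C0 * n)^2 * vol_D)) + sqrt (2 * (kp_sq_L2norm * L2_sq_on D h))"
    using vol_D_nonneg kp_sq_L2norm_nonneg L2_sq_on_nonneg by (intro sqrt_add_le_add_sqrt) auto
  also have "\<dots> = sqrt 2 * C0 * sqrt vol_D * n + sqrt 2 * L2norm kp * sqrt (L2_sq_on D h)"
    using n C0 by (simp add: real_sqrt_mult sqrt_kp_sq_L2norm)
  finally show ?thesis unfolding n_def .
qed

text \<open>\<open>L2_weight\<close> is so small that the local \<open>L\<^sup>2\<close> mass which \<open>L\<close> creates out of \<open>L\<^sup>1\<close> mass
  costs at most \<open>(1 - \<alpha>)/2\<close> of the contraction; \<open>small\<close> pays for the perturbation.\<close>
lemma mixed_norm_contraction: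
  assumes h: "h \<in> strong_borel D" and h0: "(\<integral>x. h x \<partial>lborel) = 0"
  shows "mixed_norm (perturbed_op h) \<le> (1 + \<alpha>) / 2 * mixed_norm h"
proof -
  define n where "n = weighted_L1 \<beta> h"
  define q where "q = sqrt (L2_sq_on D h)"
  define c3 where "c3 = (1 + \<beta> * RD^2) * sqrt vol_D"
  define c4 where "c4 = sqrt 2 * C0 * sqrt vol_D"
  have n0: "0 \<le> n" unfolding n_def using \<beta> by (intro weighted_L1_nonneg) simp
  have q0: "0 \<le> q" unfolding q_def using L2_sq_on_nonneg[of h] by simp
  have sm: "L2norm kp * (c3 + L2_weight * sqrt 2) \<le> (1 + \<alpha>) / 2 * L2_weight"
    using small unfolding c3_def L2_weight_def vol_D_def .
  have "L2_weight * c4 = (1 - \<alpha>) / 2 * (c4 / (c4 + 1))"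
    unfolding L2_weight_def c4_def vol_D_def by (simp add: field_simps)
  also have "\<dots> \<le> (1 - \<alpha>) / 2 * 1"
  proof (rule mult_left_mono)
    have "0 \<le> c4" unfolding c4_def using C0 vol_D_nonneg by simp
    then show "c4 / (c4 + 1) \<le> 1" by simp
  qed (use \<alpha> in simp)
  finally have ttc4: "L2_weight * c4 \<le> (1 - \<alpha>) / 2" by simp
  have "mixed_norm (perturbed_op h)
      \<le> \<alpha> * n + c3 * L2norm kp * q + L2_weight * (c4 * n + sqrt 2 * L2norm kp * q)"
  proof -
    have "weighted_L1 \<beta> (perturbed_op h) \<le> \<alpha> * n + c3 * L2norm kp * q"
      using weighted_L1_perturbed_op_le[OF h h0] unfolding n_def q_def c3_def
        by (simp add: mult.assoc)
    moreover have "L2_weight * sqrt (L2_sq_on D (perturbed_op h)) \<le> L2_weight * (c4 * n + sqrt 2 * L2norm kp * q)"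
      using sqrt_L2_sq_on_perturbed_op_le[OF h] L2_weight_pos unfolding n_def q_def c4_def
      by (intro mult_left_mono) auto
    ultimately show ?thesis unfolding mixed_norm_def by linarith
  qed
  also have "\<dots> = (\<alpha> + L2_weight * c4) * n + L2norm kp * (c3 + L2_weight * sqrt 2) * q"
    by (simp add: algebra_simps)
  also have "\<dots> \<le> (1 + \<alpha>) / 2 * n + (1 + \<alpha>) / 2 * L2_weight * q"
    using ttc4 n0 sm q0 by (intro add_mono mult_right_mono) auto
  also have "\<dots> = (1 + \<alpha>) / 2 * mixed_norm h" unfolding mixed_norm_def n_def q_def
    by (simp add: algebra_simps)
  finally show ?thesis .
qed

lemma perturbed_op_integrable:
  assumes h: "h \<in> strong_borel D" and col_sq: "col_sq y < \<infinity>"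
  shows "integrable lborel (\<lambda>x. (\<kappa> x y + kp x y) * h x)"
  using kernel_op_integrable[OF strong_borelD(1)[OF h] strong_borel_integrable(1)[OF h], of y] pert_integrand_bound(1)[OF h col_sq]
    by (simp add: distrib_right)

lemma perturbed_op_integral_abs_le:
  assumes h: "h \<in> strong_borel D" and col_sq: "col_sq y < \<infinity>"
  shows "(\<integral>x. \<bar>(\<kappa> x y + kp x y) * h x\<bar> \<partial>lborel) \<le> C0 * (\<integral>x. \<bar>h x\<bar> \<partial>lborel) + sqrt (col_sq_real y) * sqrt (L2_sq_on D h)"
proof -
  note [measurable] = strong_borelD(1)[OF h]
  have i1: "integrable lborel (\<lambda>x. \<kappa> x y * h x)"
    using kernel_op_integrable[OF strong_borelD(1)[OF h] strong_borel_integrable(1)[OF h]] .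
  have i2: "integrable lborel (\<lambda>x. kp x y * h x)"
    using pert_integrand_bound(1)[OF h col_sq] .
  have "(\<integral>x. \<bar>(\<kappa> x y + kp x y) * h x\<bar> \<partial>lborel) \<le> (\<integral>x. \<bar>\<kappa> x y * h x\<bar> + \<bar>kp x y * h x\<bar> \<partial>lborel)"
    using i1 i2 perturbed_op_integrable[OF h col_sq]
      by (intro integral_mono) (auto simp: distrib_right abs_triangle_ineq)
  also have "\<dots> = (\<integral>x. \<bar>\<kappa> x y * h x\<bar> \<partial>lborel) + (\<integral>x. \<bar>kp x y * h x\<bar> \<partial>lborel)"
    using i1 i2 by simp
  also have "(\<integral>x. \<bar>\<kappa> x y * h x\<bar> \<partial>lborel) \<le> C0 * (\<integral>x. \<bar>h x\<bar> \<partial>lborel)"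
  proof -
    have "(\<integral>x. \<bar>\<kappa> x y * h x\<bar> \<partial>lborel) \<le> (\<integral>x. C0 * \<bar>h x\<bar> \<partial>lborel)"
    proof (rule integral_mono)
      show "integrable lborel (\<lambda>x. \<bar>\<kappa> x y * h x\<bar>)" using i1 by simp
      show "integrable lborel (\<lambda>x. C0 * \<bar>h x\<bar>)"
        using strong_borel_integrable(2)[OF h]
        by simp
      fix x :: 'a
      have "\<kappa> x y * \<bar>h x\<bar> \<le> C0 * \<bar>h x\<bar>"
        by (rule mult_right_mono[OF \<kappa>_le_C0]) simp
      then show "\<bar>\<kappa> x y * h x\<bar> \<le> C0 * \<bar>h x\<bar>"
        using \<kappa>_nonneg[of x y]
        by (simp add: abs_mult)
    qed
    then show ?thesis by simp
  qed
  finally show ?thesis using pert_integrand_bound(2)[OF h col_sq] by linarith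
qed

lemma perturbed_op_diff:
  assumes h: "h \<in> strong_borel D" and g: "g \<in> strong_borel D" and col_sq: "col_sq y < \<infinity>"
  shows "perturbed_op (\<lambda>x. h x - g x) y = perturbed_op h y - perturbed_op g y"
  unfolding perturbed_op_def kernel_op_def
    using perturbed_op_integrable[OF h col_sq] perturbed_op_integrable[OF g col_sq]
  by (simp add: right_diff_distrib)

lemma mixed_norm_AE_cong:
  assumes h: "h \<in> strong_borel D" and g[measurable]: "g \<in> borel_measurable borel" and ae: "AE x in lborel. g x = h x"
  shows "mixed_norm g = mixed_norm h"
proof -
  note [measurable] = strong_borelD(1)[OF h]
  have "weighted_L1 \<beta> g = weighted_L1 \<beta> h" unfolding weighted_L1_def using ae
    by (intro integral_cong_AE) (auto elim!: eventually_mono)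
  moreover have "L2_sq_on D g = L2_sq_on D h" unfolding L2_sq_on_def using ae strong_borelD(1)[OF h]
    by (intro integral_cong_AE) (auto elim!: eventually_mono)
  ultimately show ?thesis by (simp add: mixed_norm_def)
qed

definition start_density where "start_density = (\<lambda>x. indicator (cball (0::'a) 1) x / vol_unit_ball)"
definition iter_density where "iter_density n = (perturbed_op ^^ n) start_density"
definition iter_step where "iter_step n = (\<lambda>x. iter_density (Suc n) x - iter_density n x)"
definition contraction_rate where "contraction_rate = (1 + \<alpha>) / 2"
definition iter_step_norm0 where "iter_step_norm0 = mixed_norm (iter_step 0)"

lemma start_density_strong_borel: "start_density \<in> strong_borel D"
proof -
  have "(\<lambda>x. indicator (cball (0::'a) 1) x :: real) \<in> strong_borel D"
    by (rule indicator_strong_borel[OF Dm]) auto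
  from strong_borel_scale[OF Dm this, of "1 / vol_unit_ball"] show ?thesis
    by (simp add: start_density_def)
qed

lemma start_density_integral: "(\<integral>x. start_density x \<partial>lborel) = 1"
  unfolding start_density_def using vol_unit_ball_pos emeasure_lborel_cball_finite[of "0::'a" 1]
    by (simp add: vol_unit_ball_def)

lemma iter_density_strong_borel: "iter_density n \<in> strong_borel D"
  by (induction n) (auto simp: iter_density_def start_density_strong_borel intro: perturbed_op_strong_borel)

lemma iter_density_Suc: "iter_density (Suc n) = perturbed_op (iter_density n)"
  by (simp add: iter_density_def)

lemma iter_density_integral: "(\<integral>x. iter_density n x \<partial>lborel) = 1"
proof (induction n)
  case 0 then show ?case by (simp add: iter_density_def start_density_integral)
next
  case (Suc n) then show ?case using perturbed_op_mass[OF iter_density_strong_borel[of n]]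
    by (simp add: iter_density_Suc)
qed

lemma iter_step_strong_borel: "iter_step n \<in> strong_borel D" unfolding iter_step_def
  by (rule strong_borel_diff[OF Dm iter_density_strong_borel iter_density_strong_borel])

lemma iter_step_measurable[measurable]: "iter_step n \<in> borel_measurable borel"
  using strong_borelD(1)[OF iter_step_strong_borel] .

lemma iter_step_integral: "(\<integral>x. iter_step n x \<partial>lborel) = 0"
  unfolding iter_step_def
    using strong_borel_integrable(1)[OF iter_density_strong_borel[of n]] strong_borel_integrable(1)[OF iter_density_strong_borel[of "Suc n"]] iter_density_integral
    by simp

lemma iter_step_Suc_AE: "AE y in lborel. iter_step (Suc n) y = perturbed_op (iter_step n) y"
  using col_sq_finite_AE
proof eventually_elim
  case (elim y)
  show ?case unfolding iter_step_def iter_density_Suc[of "Suc n"] iter_density_Suc[of n]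
    using perturbed_op_diff[OF iter_density_strong_borel[of "Suc n"] iter_density_strong_borel[of n] elim]
      by (simp add: iter_density_Suc)
qed

lemma contraction_rate_bounds: "0 < contraction_rate" "contraction_rate < 1" using \<alpha>
  by (auto simp: contraction_rate_def)

lemma mixed_norm_iter_step_le: "mixed_norm (iter_step n) \<le> contraction_rate^n * iter_step_norm0"
proof (induction n)
  case 0 then show ?case by (simp add: iter_step_norm0_def)
next
  case (Suc n)
  have "mixed_norm (iter_step (Suc n)) = mixed_norm (perturbed_op (iter_step n))"
    by (rule mixed_norm_AE_cong[OF perturbed_op_strong_borel[OF iter_step_strong_borel] iter_step_measurable iter_step_Suc_AE])
  also have "\<dots> \<le> contraction_rate * mixed_norm (iter_step n)"
    unfolding contraction_rate_def
    by (rule mixed_norm_contraction[OF iter_step_strong_borel iter_step_integral])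
  also have "\<dots> \<le> contraction_rate * (contraction_rate^n * iter_step_norm0)"
    using Suc contraction_rate_bounds
    by (intro mult_left_mono) auto
  finally show ?case by simp
qed

lemma weighted_L1_iter_step_le: "weighted_L1 \<beta> (iter_step n) \<le> contraction_rate^n * iter_step_norm0"
proof -
  have "weighted_L1 \<beta> (iter_step n) \<le> mixed_norm (iter_step n)" unfolding mixed_norm_def
    using L2_weight_pos L2_sq_on_nonneg[of "iter_step n"]
    by simp
  then show ?thesis using mixed_norm_iter_step_le[of n] by linarith
qed

lemma L1_iter_step_le: "(\<integral>x. \<bar>iter_step n x\<bar> \<partial>lborel) \<le> contraction_rate^n * iter_step_norm0"
  using L1_le_weighted_L1[OF iter_step_strong_borel, of n] weighted_L1_iter_step_le[of n]
    by linarith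

lemma L2_iter_step_le: "sqrt (L2_sq_on D (iter_step n)) \<le> contraction_rate^n * iter_step_norm0 / L2_weight"
proof -
  have "L2_weight * sqrt (L2_sq_on D (iter_step n)) \<le> mixed_norm (iter_step n)"
    unfolding mixed_norm_def
    using \<beta> weighted_L1_nonneg[of \<beta> "iter_step n"]
    by simp
  then have "L2_weight * sqrt (L2_sq_on D (iter_step n)) \<le> contraction_rate^n * iter_step_norm0"
    using mixed_norm_iter_step_le[of n]
    by linarith
  then show ?thesis using L2_weight_pos by (simp add: field_simps)
qed

definition iter_step_bound where "iter_step_bound y = (C0 + sqrt (col_sq_real y) / L2_weight) * iter_step_norm0"

lemma integral_abs_perturbed_integrand_le:
  assumes "col_sq y < \<infinity>"
  shows "(\<integral>x. \<bar>(\<kappa> x y + kp x y) * iter_step n x\<bar> \<partial>lborel) \<le> iter_step_bound y * contraction_rate^n"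
proof -
  have "(\<integral>x. \<bar>(\<kappa> x y + kp x y) * iter_step n x\<bar> \<partial>lborel)
      \<le> C0 * (\<integral>x. \<bar>iter_step n x\<bar> \<partial>lborel) + sqrt (col_sq_real y) * sqrt (L2_sq_on D (iter_step n))"
    by (rule perturbed_op_integral_abs_le[OF iter_step_strong_borel assms])
  also have "\<dots> \<le> C0 * (contraction_rate^n * iter_step_norm0)
      + sqrt (col_sq_real y) * (contraction_rate^n * iter_step_norm0 / L2_weight)"
    using C0 L1_iter_step_le[of n] L2_iter_step_le[of n] col_sq_real_nonneg[of y]
    by (intro add_mono mult_left_mono) auto
  also have "\<dots> = iter_step_bound y * contraction_rate^n"
    unfolding iter_step_bound_def using L2_weight_pos by (simp add: field_simps)
  finally show ?thesis .
qed

lemma iter_step_pointwise_AE: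
  "AE y in lborel. col_sq y < \<infinity> \<and> (\<forall>n. iter_step (Suc n) y = perturbed_op (iter_step n) y
     \<and> \<bar>iter_step (Suc n) y\<bar> \<le> iter_step_bound y * contraction_rate^n)"
proof -
  have "AE y in lborel. \<forall>n. iter_step (Suc n) y = perturbed_op (iter_step n) y"
    unfolding AE_all_countable using iter_step_Suc_AE by blast
  then show ?thesis using col_sq_finite_AE
  proof eventually_elim
    case (elim y)
    have "\<bar>iter_step (Suc n) y\<bar> \<le> iter_step_bound y * contraction_rate^n" for n
    proof -
      have "\<bar>iter_step (Suc n) y\<bar> = \<bar>perturbed_op (iter_step n) y\<bar>" using elim
        by simp
      also have "\<dots> \<le> (\<integral>x. \<bar>(\<kappa> x y + kp x y) * iter_step n x\<bar> \<partial>lborel)"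
        unfolding perturbed_op_def kernel_op_def by (rule integral_abs_bound)
      also have "\<dots> \<le> iter_step_bound y * contraction_rate^n"
        using elim by (intro integral_abs_perturbed_integrand_le) simp
      finally show ?thesis .
    qed
    then show ?case using elim by auto
  qed
qed

lemma col_sq_real_measurable[measurable]: "col_sq_real \<in> borel_measurable borel"
  unfolding col_sq_real_def[abs_def] by measurable

lemma col_sq_real_integrable: "integrable lborel col_sq_real"
proof -
  have "(\<integral>\<^sup>+y. ennreal (norm (col_sq_real y)) \<partial>lborel) = (\<integral>\<^sup>+y. col_sq y \<partial>lborel)"
    using col_sq_finite_AE
      by (intro nn_integral_cong_AE) (auto elim!: eventually_mono simp: col_sq_real_eq(3) col_sq_real_nonneg)
  also have "\<dots> < \<infinity>" by (simp add: nn_integral_col_sq)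
  finally show ?thesis by (subst integrable_iff_bounded) auto
qed

definition invariant_density where "invariant_density x = start_density x + (\<Sum>n. iter_step n x)"

lemma start_density_measurable[measurable]: "start_density \<in> borel_measurable borel"
  using strong_borelD(1)[OF start_density_strong_borel] .

lemma invariant_density_measurable[measurable]: "invariant_density \<in> borel_measurable borel"
  unfolding invariant_density_def[abs_def] by measurable

lemma summable_geometric_rate: "summable (\<lambda>n. c * contraction_rate^n)"
  using contraction_rate_bounds
  by (intro summable_mult summable_geometric) auto

lemma iter_step_summable_AE: "AE y in lborel. summable (\<lambda>n. \<bar>iter_step n y\<bar>)"
  using iter_step_pointwise_AE
proof eventually_elim
  case (elim y)
  have bb: "\<And>n. \<bar>iter_step (Suc n) y\<bar> \<le> iter_step_bound y * contraction_rate^n"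
    using elim
    by blast
  have "summable (\<lambda>n. \<bar>iter_step (Suc n) y\<bar>)"
    by (rule summable_comparison_test[OF _ summable_geometric_rate[of "iter_step_bound y"]]) (use bb in auto)
  then show ?case by (subst summable_Suc_iff[symmetric]) simp
qed

lemma iter_step_L1_summable: "summable (\<lambda>n. (\<integral>x. norm (iter_step n x) \<partial>lborel))"
  by (rule summable_comparison_test[OF _ summable_geometric_rate[of iter_step_norm0]]) (use L1_iter_step_le in \<open>auto simp: mult.commute\<close>)

lemma weighted_iter_step:
  shows "integrable lborel (\<lambda>x. (1 + sq_norm x) * iter_step n x)"
    "(\<integral>x. norm ((1 + sq_norm x) * iter_step n x) \<partial>lborel) \<le> (1 + 1/\<beta>) * (contraction_rate^n * iter_step_norm0)"
proof -
  show "integrable lborel (\<lambda>x. (1 + sq_norm x) * iter_step n x)"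
    by (rule strong_borelD(2)[OF iter_step_strong_borel])
  have "(\<integral>x. norm ((1 + sq_norm x) * iter_step n x) \<partial>lborel) \<le> (\<integral>x. (1 + 1/\<beta>) * ((1 + \<beta> * sq_norm x) * \<bar>iter_step n x\<bar>) \<partial>lborel)"
  proof (rule integral_mono)
    show "integrable lborel (\<lambda>x. norm ((1 + sq_norm x) * iter_step n x))"
      using strong_borelD(2)[OF iter_step_strong_borel]
      by simp
    show "integrable lborel (\<lambda>x. (1 + 1/\<beta>) * ((1 + \<beta> * sq_norm x) * \<bar>iter_step n x\<bar>))"
      using strong_borel_weighted_integrable[OF iter_step_strong_borel, of \<beta>] \<beta> by simp
    fix x :: 'a
    have "1 + sq_norm x \<le> (1 + 1/\<beta>) * (1 + \<beta> * sq_norm x)"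
      using \<beta> sq_norm_nonneg[of x]
      by (simp add: field_simps)
    then have "(1 + sq_norm x) * \<bar>iter_step n x\<bar> \<le> (1 + 1/\<beta>) * (1 + \<beta> * sq_norm x) * \<bar>iter_step n x\<bar>"
      by (rule mult_right_mono) simp
    then show "norm ((1 + sq_norm x) * iter_step n x) \<le> (1 + 1/\<beta>) * ((1 + \<beta> * sq_norm x) * \<bar>iter_step n x\<bar>)"
      using sq_norm_nonneg[of x] by (simp add: abs_mult mult.assoc)
  qed
  also have "\<dots> = (1 + 1/\<beta>) * weighted_L1 \<beta> (iter_step n)"
    unfolding weighted_L1_def
    by simp
  also have "\<dots> \<le> (1 + 1/\<beta>) * (contraction_rate^n * iter_step_norm0)"
    using weighted_L1_iter_step_le[of n] \<beta>
    by (intro mult_left_mono) auto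
  finally show "(\<integral>x. norm ((1 + sq_norm x) * iter_step n x) \<partial>lborel) \<le> (1 + 1/\<beta>) * (contraction_rate^n * iter_step_norm0)" .
qed

lemma invariant_density_weighted_integrable:
  "integrable lborel (\<lambda>x. (1 + sq_norm x) * invariant_density x)"
proof (rule integrable_cong_AE_imp)
  have s1: "summable (\<lambda>n. (\<integral>x. norm ((1 + sq_norm x) * iter_step n x) \<partial>lborel))"
    by (rule summable_comparison_test[OF _ summable_geometric_rate[of "(1 + 1/\<beta>) * iter_step_norm0"]])
       (use weighted_iter_step(2) in \<open>auto simp: ac_simps\<close>)
  have s2: "AE x in lborel. summable (\<lambda>n. norm ((1 + sq_norm x) * iter_step n x))"
    using iter_step_summable_AE by eventually_elim (auto simp: abs_mult intro: summable_mult)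
  have "integrable lborel (\<lambda>x. \<Sum>n. (1 + sq_norm x) * iter_step n x)"
    by (rule integrable_suminf[OF weighted_iter_step(1) s2 s1])
  then show "integrable lborel (\<lambda>x. (1 + sq_norm x) * start_density x + (\<Sum>n. (1 + sq_norm x) * iter_step n x))"
    using strong_borelD(2)[OF start_density_strong_borel] by simp
  show "(\<lambda>x. (1 + sq_norm x) * invariant_density x) \<in> borel_measurable lborel"
    by measurable
  show "AE x in lborel. (1 + sq_norm x) * start_density x + (\<Sum>n. (1 + sq_norm x) * iter_step n x)
      = (1 + sq_norm x) * invariant_density x"
    using iter_step_summable_AE
  proof eventually_elim
    case (elim x)
    then have "summable (\<lambda>n. iter_step n x)" by (rule summable_rabs_cancel)
    then show ?case by (simp add: invariant_density_def distrib_left suminf_mult)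
  qed
qed

lemma abs_invariant_density_le_AE:
  "AE y in lborel. \<bar>invariant_density y\<bar>
     \<le> \<bar>start_density y\<bar> + \<bar>iter_step 0 y\<bar> + iter_step_bound y / (1 - contraction_rate)"
  using iter_step_pointwise_AE
proof eventually_elim
  case (elim y)
  have bb: "\<And>n. \<bar>iter_step (Suc n) y\<bar> \<le> iter_step_bound y * contraction_rate^n"
    using elim
    by blast
  have sS: "summable (\<lambda>n. \<bar>iter_step (Suc n) y\<bar>)"
    by (rule summable_comparison_test[OF _ summable_geometric_rate[of "iter_step_bound y"]]) (use bb in auto)
  then have sd: "summable (\<lambda>n. iter_step n y)"
    by (subst summable_Suc_iff[symmetric]) (rule summable_rabs_cancel)
  have "\<bar>\<Sum>n. iter_step (Suc n) y\<bar> \<le> (\<Sum>n. \<bar>iter_step (Suc n) y\<bar>)"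
    by (rule summable_rabs[OF sS])
  also have "\<dots> \<le> (\<Sum>n. iter_step_bound y * contraction_rate^n)"
    using bb by (intro suminf_le sS summable_geometric_rate) auto
  also have "\<dots> = iter_step_bound y / (1 - contraction_rate)"
    using contraction_rate_bounds by (simp add: suminf_mult suminf_geometric summable_geometric)
  finally show ?case
    using suminf_split_head[OF sd] unfolding invariant_density_def by simp
qed

lemma invariant_density_strong_borel: "invariant_density \<in> strong_borel D"
proof -
  define A0 where "A0 = C0 * iter_step_norm0 / (1 - contraction_rate)"
  define A1 where "A1 = iter_step_norm0 / (L2_weight * (1 - contraction_rate))"
  have A: "iter_step_bound y / (1 - contraction_rate) = A0 + A1 * sqrt (col_sq_real y)" for y
  proof -
    define q where "q = 1 - contraction_rate"
    have "0 < q" using contraction_rate_bounds by (simp add: q_def)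
    then show ?thesis unfolding A0_def A1_def iter_step_bound_def q_def[symmetric]
      using L2_weight_pos by (simp add: field_simps)
  qed
  have ib: "integrable lborel (\<lambda>y. 4 * ((indicator D y * start_density y)^2 + (indicator D y * iter_step 0 y)^2
      + A0^2 * indicator D y + A1^2 * col_sq_real y))"
    using strong_borelD(3)[OF start_density_strong_borel] strong_borelD(3)[OF iter_step_strong_borel[of 0]]
      Dfin col_sq_real_integrable by simp
  have "integrable lborel (\<lambda>y. (indicator D y * invariant_density y)^2)"
  proof (rule Bochner_Integration.integrable_bound[OF ib])
    show "(\<lambda>y. (indicator D y * invariant_density y)^2) \<in> borel_measurable lborel"
      by measurable
    show "AE y in lborel. norm ((indicator D y * invariant_density y)^2) \<le> norm (4 * ((indicator D y * start_density y)^2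
      + (indicator D y * iter_step 0 y)^2 + A0^2 * indicator D y + A1^2 * col_sq_real y))"
      using abs_invariant_density_le_AE
    proof eventually_elim
      case (elim y)
      let ?G = "indicator D y * \<bar>start_density y\<bar> + indicator D y * \<bar>iter_step 0 y\<bar>
        + indicator D y * A0 + indicator D y * (A1 * sqrt (col_sq_real y))"
      have "\<bar>indicator D y * invariant_density y\<bar> \<le> ?G"
        using elim unfolding A by (auto simp: indicator_def)
      then have "(indicator D y * invariant_density y)^2 \<le> ?G^2"
        using power_mono[of _ ?G 2] by (metis abs_ge_zero power2_abs)
      also have "\<dots> \<le> 4 * ((indicator D y * \<bar>start_density y\<bar>)^2 + (indicator D y * \<bar>iter_step 0 y\<bar>)^2
          + (indicator D y * A0)^2 + (indicator D y * (A1 * sqrt (col_sq_real y)))^2)" by (rule square_sum4_le)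
      also have "\<dots> \<le> 4 * ((indicator D y * start_density y)^2 + (indicator D y * iter_step 0 y)^2
          + A0^2 * indicator D y + A1^2 * col_sq_real y)"
        using col_sq_real_nonneg[of y] by (auto simp: indicator_def power_mult_distrib)
      finally show ?case using col_sq_real_nonneg[of y] by simp
    qed
  qed
  then show ?thesis using invariant_density_weighted_integrable by (auto simp: strong_borel_def)
qed

lemma invariant_density_integral: "(\<integral>x. invariant_density x \<partial>lborel) = 1"
proof -
  have idd: "\<And>n. integrable lborel (iter_step n)"
    using strong_borel_integrable(1)[OF iter_step_strong_borel] .
  have s2: "AE x in lborel. summable (\<lambda>n. norm (iter_step n x))" using iter_step_summable_AE
    by simp
  have "(\<integral>x. invariant_density x \<partial>lborel) = (\<integral>x. start_density x \<partial>lborel) + (\<integral>x. (\<Sum>n. iter_step n x) \<partial>lborel)"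
    unfolding invariant_density_def
      using strong_borel_integrable(1)[OF start_density_strong_borel] integrable_suminf[OF idd s2 iter_step_L1_summable]
    by (rule Bochner_Integration.integral_add)
  also have "(\<integral>x. (\<Sum>n. iter_step n x) \<partial>lborel) = (\<Sum>n. (\<integral>x. iter_step n x \<partial>lborel))"
    by (rule integral_suminf[OF idd s2 iter_step_L1_summable])
  finally show ?thesis by (simp add: start_density_integral iter_step_integral)
qed

lemma invariant_density_fixed: "AE y in lborel. perturbed_op invariant_density y = invariant_density y"
  using iter_step_pointwise_AE iter_step_summable_AE
proof eventually_elim
  case (elim y)
  have col_sq: "col_sq y < \<infinity>" using elim by blast
  have rec: "\<And>n. perturbed_op (iter_step n) y = iter_step (Suc n) y" using elim by auto
  have sy: "summable (\<lambda>n. iter_step n y)" using elim by (auto intro: summable_rabs_cancel)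
  define k where "k = (\<lambda>x. \<kappa> x y + kp x y)"
  have kx: "\<And>x. \<kappa> x y + kp x y = k x" by (simp add: k_def)
  have ik: "\<And>n. integrable lborel (\<lambda>x. k x * iter_step n x)" unfolding k_def
    using perturbed_op_integrable[OF iter_step_strong_borel col_sq] .
  have s2: "AE x in lborel. summable (\<lambda>n. norm (k x * iter_step n x))"
    using iter_step_summable_AE by eventually_elim (auto simp: abs_mult intro: summable_mult)
  have s3: "summable (\<lambda>n. (\<integral>x. norm (k x * iter_step n x) \<partial>lborel))"
    using integral_abs_perturbed_integrand_le[OF col_sq] unfolding k_def
    by (intro summable_comparison_test[OF _ summable_geometric_rate[of "iter_step_bound y"]]) auto
  have "perturbed_op invariant_density y = (\<integral>x. k x * start_density x + (\<Sum>n. k x * iter_step n x) \<partial>lborel)"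
    unfolding perturbed_op_def kernel_op_def kx
  proof (rule integral_cong_AE)
    show "(\<lambda>x. k x * invariant_density x) \<in> borel_measurable lborel" unfolding k_def
      by measurable
    show "(\<lambda>x. k x * start_density x + (\<Sum>n. k x * iter_step n x)) \<in> borel_measurable lborel"
      unfolding k_def
      by measurable
    show "AE x in lborel. k x * invariant_density x = k x * start_density x + (\<Sum>n. k x * iter_step n x)"
      using iter_step_summable_AE
    proof eventually_elim
      case (elim x)
      then have "summable (\<lambda>n. iter_step n x)" by (rule summable_rabs_cancel)
      then show ?case by (simp add: invariant_density_def distrib_left suminf_mult)
    qed
  qed
  also have "\<dots> = (\<integral>x. k x * start_density x \<partial>lborel) + (\<integral>x. (\<Sum>n. k x * iter_step n x) \<partial>lborel)"
    using perturbed_op_integrable[OF start_density_strong_borel col_sq] integrable_suminf[OF ik s2 s3]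
      unfolding k_def
    by (rule Bochner_Integration.integral_add)
  also have "(\<integral>x. (\<Sum>n. k x * iter_step n x) \<partial>lborel) = (\<Sum>n. (\<integral>x. k x * iter_step n x \<partial>lborel))"
    by (rule integral_suminf[OF ik s2 s3])
  also have "(\<Sum>n. (\<integral>x. k x * iter_step n x \<partial>lborel)) = (\<Sum>n. iter_step (Suc n) y)"
    using rec unfolding perturbed_op_def kernel_op_def k_def by simp
  also have "(\<integral>x. k x * start_density x \<partial>lborel) = start_density y + iter_step 0 y"
    unfolding k_def using iter_density_Suc[of 0]
      by (simp add: iter_step_def perturbed_op_def kernel_op_def iter_density_def)
  also have "start_density y + iter_step 0 y + (\<Sum>n. iter_step (Suc n) y) = invariant_density y"
    unfolding invariant_density_def using suminf_split_head[OF sy] by simp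
  finally show ?case .
qed

lemma invariant_density_unique:
  assumes g: "g \<in> strong_borel D" and g1: "(\<integral>x. g x \<partial>lborel) = 1" and gf: "AE y in lborel. perturbed_op g y = g y"
  shows "AE x in lborel. g x = invariant_density x"
proof -
  define h where "h = (\<lambda>x. g x - invariant_density x)"
  have hB: "h \<in> strong_borel D" unfolding h_def
    by (rule strong_borel_diff[OF Dm g invariant_density_strong_borel])
  note [measurable] = strong_borelD(1)[OF hB] strong_borelD(1)[OF g]
  have h0: "(\<integral>x. h x \<partial>lborel) = 0"
    unfolding h_def
      using strong_borel_integrable(1)[OF g] strong_borel_integrable(1)[OF invariant_density_strong_borel] g1 invariant_density_integral
      by simp
  have "AE y in lborel. perturbed_op h y = h y"
    using gf invariant_density_fixed col_sq_finite_AE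
  proof eventually_elim
    case (elim y)
    then show ?case unfolding h_def using perturbed_op_diff[OF g invariant_density_strong_borel]
      by simp
  qed
  then have "mixed_norm (perturbed_op h) = mixed_norm h"
    by (intro mixed_norm_AE_cong[OF hB]) (auto intro: perturbed_op_measurable)
  with mixed_norm_contraction[OF hB h0] have "mixed_norm h \<le> contraction_rate * mixed_norm h"
    by (simp add: contraction_rate_def)
  then have "mixed_norm h \<le> 0" using contraction_rate_bounds mixed_norm_nonneg[of h]
    by (smt (verit) mult_le_cancel_right1)
  then have "weighted_L1 \<beta> h = 0"
    using mixed_norm_nonneg[of h] weighted_L1_nonneg[of \<beta> h] \<beta> L2_weight_pos L2_sq_on_nonneg[of h]
      unfolding mixed_norm_def
    by (smt (verit) mult_nonneg_nonneg real_sqrt_ge_zero)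
  then have "AE x in lborel. (1 + \<beta> * sq_norm x) * \<bar>h x\<bar> = 0"
    unfolding weighted_L1_def using strong_borel_weighted_integrable[OF hB, of \<beta>] \<beta>
    by (subst (asm) integral_nonneg_eq_0_iff_AE) auto
  then show ?thesis
  proof eventually_elim
    case (elim x)
    have "0 < 1 + \<beta> * sq_norm x" using \<beta> by (simp add: add_pos_nonneg)
    with elim show ?case by (simp add: h_def)
  qed
qed

end

context contracting_perturbation
begin

lemma perturbed_kernel_measurable[measurable]:
  "(\<lambda>(x,y). \<kappa> x y + kp x y) \<in> borel_measurable (lborel \<Otimes>\<^sub>M lborel)"
  by measurable

lemma transfer_eq_perturbed_op:
  assumes [measurable]: "f \<in> borel_measurable borel"
  shows "transfer (\<lambda>x y. \<kappa> x y + kp x y) f = perturbed_op f"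
  unfolding transfer_def perturbed_op_def kernel_op_def
    by (auto simp: fun_eq_iff intro!: integral_completion)

lemma unique_invariant_density: "unique_invariant_density D (\<lambda>x y. \<kappa> x y + kp x y)"
  unfolding unique_invariant_density_def
proof (intro bexI conjI ballI impI)
  show "invariant_density \<in> strong_space D"
    by (rule strong_borel_in_strong_space[OF Dm invariant_density_strong_borel])
  show "(LINT x|lebesgue. invariant_density x) = 1"
    using invariant_density_integral by (simp add: integral_completion)
  show "AE y in lebesgue. transfer (\<lambda>x y. \<kappa> x y + kp x y) invariant_density y = invariant_density y"
    unfolding transfer_eq_perturbed_op[OF invariant_density_measurable]
    using invariant_density_fixed by (rule AE_completion)
  fix g assume g: "g \<in> strong_space D"
    and "(LINT x|lebesgue. g x) = 1 \<and> (AE y in lebesgue. transfer (\<lambda>x y. \<kappa> x y + kp x y) g y = g y)"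
  then have g1: "(LINT x|lebesgue. g x) = 1"
    and gf: "AE y in lebesgue. transfer (\<lambda>x y. \<kappa> x y + kp x y) g y = g y" by auto
  have gm: "g \<in> borel_measurable lebesgue" using g by (simp add: strong_space_def L1w_def)
  obtain g' where g': "g' \<in> strong_borel D" and ae: "AE x in lebesgue. g x = g' x"
    by (rule strong_space_borel_representative[OF Dm g])
  note [measurable] = strong_borelD(1)[OF g']
  have "(LINT x|lebesgue. g' x) = (LINT x|lebesgue. g x)"
    using ae gm
      by (intro integral_cong_AE) (auto elim!: eventually_mono intro: measurable_completion)
  then have "(\<integral>x. g' x \<partial>lborel) = 1" using g1 by (simp add: integral_completion)
  moreover have "AE y in lborel. perturbed_op g' y = g' y"
  proof -
    have teq: "transfer (\<lambda>x y. \<kappa> x y + kp x y) g = transfer (\<lambda>x y. \<kappa> x y + kp x y) g'"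
      by (rule transfer_AE_cong[OF perturbed_kernel_measurable gm _ ae]) measurable
    have "AE y in lebesgue. perturbed_op g' y = g' y"
      using gf ae unfolding teq transfer_eq_perturbed_op[of g', OF strong_borelD(1)[OF g']]
      by eventually_elim simp
    then show ?thesis by (simp add: AE_completion_iff)
  qed
  ultimately have "AE x in lborel. g' x = invariant_density x"
    by (rule invariant_density_unique[OF g'])
  then have "AE x in lebesgue. g' x = invariant_density x" by (rule AE_completion)
  with ae show "AE x in lebesgue. g x = invariant_density x" by eventually_elim simp
qed

end

context drift_kernel
begin

lemma small_perturbation_unique_invariant_density:
  assumes DRD: "D \<subseteq> cball 0 RD"
  obtains \<epsilon>0 where "0 < \<epsilon>0"
    "\<And>kp. L2kernel kp \<Longrightarrow> (\<And>x y. (x, y) \<notin> D \<times> D \<Longrightarrow> kp x y = 0) \<Longrightarrow>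
       integral_preserving D (\<lambda>x y. \<kappa> x y + kp x y) \<Longrightarrow> L2norm kp \<le> \<epsilon>0 \<Longrightarrow>
       unique_invariant_density D (\<lambda>x y. \<kappa> x y + kp x y)"
proof -
  obtain \<beta> \<alpha> where \<beta>: "0 < \<beta>" and \<alpha>: "0 \<le> \<alpha>" "\<alpha> < 1"
    and contr: "\<And>f. f \<in> strong_borel D \<Longrightarrow> (\<integral>x. f x \<partial>lborel) = 0 \<Longrightarrow>
      weighted_L1 \<beta> (kernel_op \<kappa> f) \<le> \<alpha> * weighted_L1 \<beta> f"
    using weighted_L1_contraction by blast
  define m where "m = measure lborel D"
  define w where "w = (1 - \<alpha>) / (2 * (sqrt 2 * C0 * sqrt m + 1))"
  define c where "c = (1 + \<beta> * RD^2) * sqrt m + w * sqrt 2"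
  have w: "0 < w" unfolding w_def using \<alpha> C0
    by (intro divide_pos_pos) (auto intro!: add_nonneg_pos simp: m_def)
  have c: "0 < c" unfolding c_def using \<beta> w by (intro add_nonneg_pos) (auto simp: m_def)
  show ?thesis
  proof (rule that[of "(1 + \<alpha>) / 2 * w / c"])
    show "0 < (1 + \<alpha>) / 2 * w / c" using \<alpha> w c by simp
    fix kp assume kp: "L2kernel kp" "\<And>x y. (x, y) \<notin> D \<times> D \<Longrightarrow> kp x y = 0"
      "integral_preserving D (\<lambda>x y. \<kappa> x y + kp x y)" and small: "L2norm kp \<le> (1 + \<alpha>) / 2 * w / c"
    have "L2norm kp * c \<le> (1 + \<alpha>) / 2 * w"
      using small c by (simp add: pos_le_divide_eq)
    then have small_cond: "L2norm kp * ((1 + \<beta> * RD^2) * sqrt (measure lborel D)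
          + (1 - \<alpha>) / (2 * (sqrt 2 * C0 * sqrt (measure lborel D) + 1)) * sqrt 2)
       \<le> (1 + \<alpha>) / 2 * ((1 - \<alpha>) / (2 * (sqrt 2 * C0 * sqrt (measure lborel D) + 1)))"
      by (simp only: c_def w_def m_def)
    interpret contracting_perturbation \<kappa> \<theta>1 D lam0 C0 a A \<gamma> K kp RD \<alpha> \<beta>
      by (intro contracting_perturbation.intro perturbed_kernel.intro drift_kernel_axioms
            perturbed_kernel_axioms.intro contracting_perturbation_axioms.intro)
         (use kp DRD \<alpha> \<beta> contr small_cond in auto)
    show "unique_invariant_density D (\<lambda>x y. \<kappa> x y + kp x y)"
      by (rule unique_invariant_density)
  qed
qed

end

lemma (in gaussian_kernel) unique_invariant_density_first_order_perturbation:
  assumes DRD: "D \<subseteq> cball 0 RD"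
    and kd: "L2kernel kd" "\<And>x y. (x, y) \<notin> D \<times> D \<Longrightarrow> kd x y = 0"
    and r: "\<And>\<delta>. 0 \<le> \<delta> \<Longrightarrow> \<delta> < \<delta>bar \<Longrightarrow> L2kernel (r \<delta>)"
      "\<And>\<delta> x y. 0 \<le> \<delta> \<Longrightarrow> \<delta> < \<delta>bar \<Longrightarrow> (x, y) \<notin> D \<times> D \<Longrightarrow> r \<delta> x y = 0"
      "\<And>x y. r 0 x y = 0" "((\<lambda>\<delta>. L2norm (r \<delta>) / \<delta>) \<longlongrightarrow> 0) (at_right 0)"
    and pres: "\<And>\<delta>. 0 \<le> \<delta> \<Longrightarrow> \<delta> < \<delta>bar \<Longrightarrow>
      integral_preserving D (\<lambda>x y. \<kappa> x y + \<delta> * kd x y + r \<delta> x y)"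
  obtains \<delta>1 where "0 < \<delta>1" "\<And>\<delta>. 0 \<le> \<delta> \<Longrightarrow> \<delta> < \<delta>1 \<Longrightarrow> \<delta> < \<delta>bar \<Longrightarrow>
    unique_invariant_density D (\<lambda>x y. \<kappa> x y + \<delta> * kd x y + r \<delta> x y)"
proof -
  obtain \<gamma> K where lyap: "0 \<le> \<gamma>" "\<gamma> < 1" "1 \<le> K"
    "AE x in lborel. (\<integral>\<^sup>+y. ennreal (sq_norm y * \<kappa> x y) \<partial>lborel) \<le> ennreal (\<gamma> * sq_norm x + K)"
    by (rule lyapunov_drift)
  interpret drift_kernel \<kappa> \<theta>1 D lam0 C0 a A \<gamma> K
    using lyap by (intro drift_kernel.intro gaussian_kernel_axioms drift_kernel_axioms.intro)
  obtain \<epsilon>0 where "0 < \<epsilon>0" and stable: "\<And>kp. L2kernel kp \<Longrightarrow> (\<And>x y. (x, y) \<notin> D \<times> D \<Longrightarrow> kp x y = 0) \<Longrightarrow>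
       integral_preserving D (\<lambda>x y. \<kappa> x y + kp x y) \<Longrightarrow> L2norm kp \<le> \<epsilon>0 \<Longrightarrow>
       unique_invariant_density D (\<lambda>x y. \<kappa> x y + kp x y)"
    using small_perturbation_unique_invariant_density[OF DRD] by blast
  obtain \<delta>1 where "0 < \<delta>1" and small: "\<And>\<delta>. 0 \<le> \<delta> \<Longrightarrow> \<delta> < \<delta>1 \<Longrightarrow> \<delta> < \<delta>bar \<Longrightarrow>
       L2kernel (\<lambda>x y. \<delta> * kd x y + r \<delta> x y) \<and> L2norm (\<lambda>x y. \<delta> * kd x y + r \<delta> x y) \<le> \<epsilon>0"
    using L2norm_first_order_perturbation_small[OF kd(1) r(1,3,4) \<open>0 < \<epsilon>0\<close>]
      by blast
  show ?thesis
  proof (rule that[OF \<open>0 < \<delta>1\<close>])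
    fix \<delta> assume \<delta>: "0 \<le> \<delta>" "\<delta> < \<delta>1" "\<delta> < \<delta>bar"
    have split: "(\<lambda>x y. \<kappa> x y + \<delta> * kd x y + r \<delta> x y) = (\<lambda>x y. \<kappa> x y + (\<delta> * kd x y + r \<delta> x y))"
      by (simp add: fun_eq_iff add.assoc)
    show "unique_invariant_density D (\<lambda>x y. \<kappa> x y + \<delta> * kd x y + r \<delta> x y)"
      unfolding split using small[OF \<delta>] pres[OF \<delta>(1,3)] kd(2) r(2)[OF \<delta>(1,3)]
      by (intro stable) (auto simp: split)
  qed
qed

theorem proposition4p5:
  fixes b :: "'a::euclidean_space \<Rightarrow> 'a"
    and \<theta> :: "real \<Rightarrow> 'a \<Rightarrow> 'a"
    and \<kappa> :: "'a \<Rightarrow> 'a \<Rightarrow> real"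
    and c1 c2 lam0 lam1 C0 C1 \<delta>bar :: real
    and D :: "'a set"
    and \<kappa>dot :: "'a \<Rightarrow> 'a \<Rightarrow> real"
    and r :: "real \<Rightarrow> 'a \<Rightarrow> 'a \<Rightarrow> real"
  assumes lip: "\<And>x0. \<exists>K>0. \<exists>\<delta>0>0. \<forall>x. norm (x0 - x) < \<delta>0 \<longrightarrow>
                    norm (b x0 - b x) \<le> K * norm (x0 - x)"
    and diss: "c2 > 0" "\<And>x. inner (b x) x \<le> c1 - c2 * (norm x)^2"
    and flow0: "\<And>x. \<theta> 0 x = x"
    and flow: "\<And>x t. t \<ge> 0 \<Longrightarrow>
                 ((\<lambda>s. \<theta> s x) has_vector_derivative b (\<theta> t x)) (at t within {0..})"
    and \<kappa>_cont: "continuous_on UNIV (\<lambda>z. \<kappa> (fst z) (snd z))"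
    and cst: "0 < lam0" "lam0 \<le> 1" "0 < lam1" "lam1 \<le> 1" "C0 \<ge> 1" "C1 \<ge> 1"
    and gauss_lower: "\<And>x y. exp (- ((norm (\<theta> 1 x - y))^2) / lam0) / C0 \<le> \<kappa> x y"
    and gauss_upper: "\<And>x y. \<kappa> x y \<le> C0 * exp (- lam0 * (norm (\<theta> 1 x - y))^2)"
    and grad_x: "\<And>x y. \<exists>Dx. ((\<lambda>x'. \<kappa> x' y) has_derivative Dx) (at x) \<and>
                   onorm Dx \<le> C1 * exp (- lam1 * (norm (\<theta> 1 x - y))^2)"
    and grad_y: "\<And>x y. \<exists>Dy. ((\<lambda>y'. \<kappa> x y') has_derivative Dy) (at y) \<and>
                   onorm Dy \<le> C1 * exp (- lam1 * (norm (\<theta> 1 x - y))^2)"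
    and D_cpt: "compact D" "0 \<in> interior D"
    and \<delta>bar_pos: "\<delta>bar > 0"
    and \<kappa>dot_L2: "L2kernel \<kappa>dot"
    and \<kappa>dot_supp: "\<And>x y. (x, y) \<notin> D \<times> D \<Longrightarrow> \<kappa>dot x y = 0"
    and r_L2: "\<And>\<delta>. 0 \<le> \<delta> \<Longrightarrow> \<delta> < \<delta>bar \<Longrightarrow> L2kernel (r \<delta>)"
    and r_supp: "\<And>\<delta> x y. 0 \<le> \<delta> \<Longrightarrow> \<delta> < \<delta>bar \<Longrightarrow> (x, y) \<notin> D \<times> D \<Longrightarrow> r \<delta> x y = 0"
    and r0: "\<And>x y. r 0 x y = 0"
    and r_small: "((\<lambda>\<delta>. L2norm (r \<delta>) / \<delta>) \<longlongrightarrow> 0) (at_right 0)"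
    and int_pres: "\<And>\<delta> g. 0 \<le> \<delta> \<Longrightarrow> \<delta> < \<delta>bar \<Longrightarrow> g \<in> strong_space D \<Longrightarrow>
        integrable lebesgue (transfer (\<lambda>x y. \<kappa> x y + \<delta> * \<kappa>dot x y + r \<delta> x y) g) \<and>
        (LINT y|lebesgue. transfer (\<lambda>x y. \<kappa> x y + \<delta> * \<kappa>dot x y + r \<delta> x y) g y)
          = (LINT x|lebesgue. g x)"
  shows "\<exists>\<delta>1>0. \<forall>\<delta>. 0 \<le> \<delta> \<and> \<delta> < \<delta>1 \<and> \<delta> < \<delta>bar \<longrightarrow>
           (\<exists>f \<in> strong_space D.
              (LINT x|lebesgue. f x) = 1 \<and>
              (AE y in lebesgue. transfer (\<lambda>x y. \<kappa> x y + \<delta> * \<kappa>dot x y + r \<delta> x y) f y = f y) \<and>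
              (\<forall>g \<in> strong_space D.
                 (LINT x|lebesgue. g x) = 1 \<and>
                 (AE y in lebesgue. transfer (\<lambda>x y. \<kappa> x y + \<delta> * \<kappa>dot x y + r \<delta> x y) g y = g y)
                 \<longrightarrow> (AE x in lebesgue. g x = f x)))"
proof -
  have Dm: "D \<in> sets borel" using D_cpt by (simp add: compact_imp_closed borel_closed)
  obtain RD where DRD: "D \<subseteq> cball 0 RD"
    using compact_imp_bounded[OF D_cpt(1)] by (auto simp: bounded_iff subset_iff)
  have "emeasure lborel D \<le> emeasure lborel (cball (0::'a) RD)" using DRD
    by (rule emeasure_mono) simp
  then have "emeasure lborel D < \<infinity>"
    using emeasure_lborel_cball_finite[of "0::'a" RD] by (rule le_less_trans)
  moreover have "(\<lambda>(x,y). \<kappa> x y) \<in> borel_measurable (lborel \<Otimes>\<^sub>M lborel)"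
    using borel_measurable_continuous_onI[OF \<kappa>_cont]
      by (simp add: lborel_prod case_prod_beta')
  moreover have "integral_preserving D \<kappa>"
    using int_pres[of 0] \<delta>bar_pos r0 by (simp add: integral_preserving_def)
  ultimately interpret gaussian_kernel \<kappa> "\<theta> 1" D lam0 C0 "exp (-2 * c2)" "\<bar>c1\<bar> / c2"
    using Dm cst(1,5) gauss_lower gauss_upper flow_sq_norm_bound[OF diss flow0 flow] diss(1)
    by (intro gaussian_kernel.intro) simp_all
  have "\<And>\<delta>. 0 \<le> \<delta> \<Longrightarrow> \<delta> < \<delta>bar \<Longrightarrow>
      integral_preserving D (\<lambda>x y. \<kappa> x y + \<delta> * \<kappa>dot x y + r \<delta> x y)"
    using int_pres by (simp add: integral_preserving_def)
  then obtain \<delta>1 where "0 < \<delta>1" and unique: "\<And>\<delta>. 0 \<le> \<delta> \<Longrightarrow> \<delta> < \<delta>1 \<Longrightarrow> \<delta> < \<delta>bar \<Longrightarrow>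
      unique_invariant_density D (\<lambda>x y. \<kappa> x y + \<delta> * \<kappa>dot x y + r \<delta> x y)"
    using unique_invariant_density_first_order_perturbation[OF DRD \<kappa>dot_L2 \<kappa>dot_supp r_L2 r_supp r0 r_small]
    by blast
  then show ?thesis unfolding unique_invariant_density_def by blast
qed

end
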